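(* Let $\mathbb{T}$ be a time scale with $\sup\mathbb{T}=+\infty$ and bounded graininess, and let $A$ be a real $n\times n$ matrix. The system $x^\Delta=Ax$ on $\mathbb{T}$ is uniformly exponentially stable if and only if $\operatorname{spec}(A)\subset\mathcal{S}_\mathbb{T}$.
   Context: A system $x^\Delta=Ax$ (with $x$ real or complex) on a time scale $\mathbb{T}$ is uniformly exponentially stable if there exist $K\ge1$, $\alpha>0$ and an open neighborhood $V$ of $0$ such that for all $t_0\le t$ in $\mathbb{T}$ and all $x_0\in V$ the solution with $x(t_0)=x_0$ satisfies $\|x(t)\|\le Ke^{-\alpha(t-t_0)}\|x_0\|$. Here $x^\Delta$ is the delta derivative on $\mathbb{T}$. $\mathcal{S}_\mathbb{T}$ is the set of $\lambda\in\mathbb{C}$ for which the scalar equation $x^\Delta=\lambda x$ on $\mathbb{T}$ is uniformly exponentially stable. $\operatorname{spec}(A)$ is the set of (complex) eigenvalues of $A$. *)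

theory Defs
  imports "HOL-Analysis.Analysis"
begin

definition time_scale :: "real set \<Rightarrow> bool" where
  "time_scale T \<longleftrightarrow> T \<noteq> {} \<and> closed T"

definition sigma :: "real set \<Rightarrow> real \<Rightarrow> real" where
  "sigma T t = (if {s \<in> T. s > t} = {} then t else Inf {s \<in> T. s > t})"

definition graininess :: "real set \<Rightarrow> real \<Rightarrow> real" where
  "graininess T t = sigma T t - t"

definition has_delta_derivative ::
  "real set \<Rightarrow> (real \<Rightarrow> 'v::real_normed_vector) \<Rightarrow> 'v \<Rightarrow> real \<Rightarrow> bool" where
  "has_delta_derivative T f v t \<longleftrightarrow>
     (\<forall>\<epsilon>>0. \<exists>\<delta>>0. \<forall>s\<in>T. \<bar>s - t\<bar> < \<delta> \<longrightarrow>
        norm (f (sigma T t) - f s - (sigma T t - s) *\<^sub>R v) \<le> \<epsilon> * \<bar>sigma T t - s\<bar>)"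

definition is_solution ::
  "real set \<Rightarrow> ('v::real_normed_vector \<Rightarrow> 'v) \<Rightarrow> real \<Rightarrow> (real \<Rightarrow> 'v) \<Rightarrow> bool" where
  "is_solution T F t0 x \<longleftrightarrow>
     (\<forall>t\<in>T. t0 \<le> t \<longrightarrow> has_delta_derivative (T \<inter> {t0..}) x (F (x t)) t)"

definition uniformly_exp_stable ::
  "real set \<Rightarrow> ('v::real_normed_vector \<Rightarrow> 'v) \<Rightarrow> bool" where
  "uniformly_exp_stable T F \<longleftrightarrow>
     (\<exists>K \<ge> 1. \<exists>\<alpha> > 0. \<exists>V. open V \<and> 0 \<in> V \<and>
        (\<forall>t0\<in>T. \<forall>t\<in>T. \<forall>x0\<in>V. \<forall>x. t0 \<le> t \<longrightarrow> is_solution T F t0 x \<longrightarrow> x t0 = x0 \<longrightarrow>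
           norm (x t) \<le> K * exp (- \<alpha> * (t - t0)) * norm x0))"

definition stability_set :: "real set \<Rightarrow> complex set" where
  "stability_set T = {c. uniformly_exp_stable T (\<lambda>z::complex. c * z)}"

definition spec :: "real^'n^'n \<Rightarrow> complex set" where
  "spec A = {c. \<exists>v::complex^'n. v \<noteq> 0 \<and>
      (\<chi> i j. complex_of_real (A $ i $ j)) *v v = (\<chi> i. c * v $ i)}"

end

theory Submission
  imports Defs "HOL-Computational_Algebra.Fundamental_Theorem_Algebra"
begin

text \<open>Necessity: if \<open>A v = \<lambda> v\<close> and \<open>y\<close> solves \<open>y\<^sup>\<Delta> = \<lambda> y\<close>, the real and imaginary parts
  of \<open>y(t) v\<close> solve the real system, so its stability passes to the scalar equation.

  Sufficiency: factor an annihilating polynomial of \<open>A\<close> as \<open>\<Prod>(X - \<lambda>\<^sub>i)\<close> and peel off one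
  factor at a time: if \<open>(A - \<lambda>) W x(t)\<close> decays exponentially, uniformly in the solution \<open>x\<close>,
  then so does \<open>W x(t)\<close>.  For \<open>\<lambda> \<notin> spec A\<close> this is invertibility of \<open>A - \<lambda>\<close>; otherwise
  the coordinates of \<open>W x\<close> solve \<open>u\<^sup>\<Delta> = \<lambda> u + f\<close> with exponentially decaying forcing \<open>f\<close>,
  and scalar stability survives such forcing.  The latter comes from variation of constants with
  an explicitly constructed time-scale exponential plus Gronwall's inequality on windows of
  bounded length; bounded graininess guarantees that every window contains a point of \<open>T\<close>.
  Starting from \<open>W = 0\<close> and ending at \<open>W = I\<close> gives stability of the system.\<close>

section \<open>Time scales\<close>

locale unbounded_time_scale =
  fixes T :: "real set"
  assumes closed_T: "closed T" and unbounded_T: "\<not> bdd_above T"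
begin

lemma points_above_nonempty: "{s\<in>T. s > t} \<noteq> {}"
  using unbounded_T unfolding bdd_above_def by (auto simp: not_le)

lemma sigma_eq_Inf: "sigma T t = Inf {s\<in>T. s > t}"
  unfolding sigma_def by (rule if_not_P[OF points_above_nonempty])

lemma sigma_ge: "t \<le> sigma T t"
  unfolding sigma_eq_Inf by (rule cInf_greatest[OF points_above_nonempty]) auto

lemma sigma_le: "s \<in> T \<Longrightarrow> t < s \<Longrightarrow> sigma T t \<le> s"
  unfolding sigma_eq_Inf by (rule cInf_lower) (auto intro: bdd_belowI[of _ t])

lemma sigma_in_T: "sigma T t \<in> T"
  unfolding sigma_eq_Inf
  by (rule closed_subset_contains_Inf[OF closed_T _ points_above_nonempty])
     (auto intro: bdd_belowI[of _ t])

lemma mono_sigma: "mono (sigma T)"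
proof (rule monoI)
  fix t1 t2 :: real assume "t1 \<le> t2"
  then show "sigma T t1 \<le> sigma T t2"
    unfolding sigma_eq_Inf[of t2] by (intro cInf_greatest[OF points_above_nonempty]) (auto intro: sigma_le)
qed

lemma right_dense_approx:
  assumes "sigma T t = t" "e > 0"
  shows "\<exists>s\<in>T. t < s \<and> s < t + e"
proof (rule ccontr)
  assume "\<not> ?thesis"
  then have "t + e \<le> sigma T t"
    unfolding sigma_eq_Inf by (intro cInf_greatest[OF points_above_nonempty]) (auto simp: not_less)
  with assms show False by simp
qed

lemma sigma_restrict: "t0 \<le> t \<Longrightarrow> sigma (T \<inter> {t0..}) t = sigma T t"
proof -
  assume "t0 \<le> t"
  then have "{s \<in> T \<inter> {t0..}. s > t} = {s\<in>T. s > t}" by auto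
  then show ?thesis unfolding sigma_def by (simp only:)
qed

lemma left_scattered_predecessor:
  assumes t0: "t0 \<in> T" and u: "u \<in> T" "t0 < u"
    and d: "d > 0" "\<forall>s\<in>T. \<not> (u - d < s \<and> s < u)"
  obtains r where "r \<in> T" "t0 \<le> r" "r < u" "sigma T r = u"
proof -
  define r where "r = Sup (T \<inter> {t0..u-d} \<union> {t0})"
  have "r \<in> T \<inter> {t0..u-d} \<union> {t0}"
    unfolding r_def by (rule closed_contains_Sup) (simp_all add: closed_Int closed_T)
  then have r: "r \<in> T" "r < u" using t0 d u by auto
  have "t0 \<le> r" unfolding r_def by (rule cSup_upper) auto
  have no_between: False if "s \<in> T" "r < s" "s < u" for s
  proof (cases "s \<le> u - d")
    case True
    then have "s \<le> r" unfolding r_def using that \<open>t0 \<le> r\<close> by (intro cSup_upper) auto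
    with that show False by simp
  qed (use d that in auto)
  have "sigma T r \<noteq> r"
  proof
    assume "sigma T r = r"
    from right_dense_approx[OF this, of "u - r"] r show False by (auto intro: no_between)
  qed
  then have "r < sigma T r" using sigma_ge[of r] by simp
  moreover have "sigma T r \<le> u" using sigma_le[OF u(1) r(2)] .
  moreover have "\<not> sigma T r < u" using no_between[OF sigma_in_T] \<open>r < sigma T r\<close> by blast
  ultimately have "sigma T r = u" by simp
  with r \<open>t0 \<le> r\<close> show thesis by (intro that)
qed

lemma time_scale_induct_at:
  assumes t0: "t0 \<in> T" and "P t0"
    and right_scattered: "\<And>t. t \<in> T \<Longrightarrow> t0 \<le> t \<Longrightarrow> t < sigma T t \<Longrightarrow> P t \<Longrightarrow> P (sigma T t)"
    and left_dense: "\<And>t. t \<in> T \<Longrightarrow> t0 < t \<Longrightarrow> (\<forall>d>0. \<exists>s\<in>T. t - d < s \<and> s < t) \<Longrightarrow>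
            (\<forall>s\<in>T. t0 \<le> s \<and> s < t \<longrightarrow> P s) \<Longrightarrow> P t"
    and u: "u \<in> T" "t0 \<le> u" and below: "\<forall>s\<in>T. t0 \<le> s \<and> s < u \<longrightarrow> P s"
  shows "P u"
proof (cases "u = t0")
  case False
  then have "t0 < u" using u by simp
  show ?thesis
  proof (cases "\<forall>d>0. \<exists>s\<in>T. u - d < s \<and> s < u")
    case True
    show ?thesis by (rule left_dense[OF u(1) \<open>t0 < u\<close> True below])
  next
    case False
    then obtain d where "d > 0" "\<forall>s\<in>T. \<not> (u - d < s \<and> s < u)" by auto
    from left_scattered_predecessor[OF t0 u(1) \<open>t0 < u\<close> this] obtain r
      where "r \<in> T" "t0 \<le> r" "r < u" "sigma T r = u" .
    then show ?thesis using right_scattered[of r] below by auto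
  qed
qed (use \<open>P t0\<close> in simp)

text \<open>The infimum of the counterexamples would be a point where the three steps clash.\<close>

lemma time_scale_induct:
  assumes t0: "t0 \<in> T" and P0: "P t0"
    and right_scattered: "\<And>t. t \<in> T \<Longrightarrow> t0 \<le> t \<Longrightarrow> t < sigma T t \<Longrightarrow> P t \<Longrightarrow> P (sigma T t)"
    and right_dense: "\<And>t. t \<in> T \<Longrightarrow> t0 \<le> t \<Longrightarrow> sigma T t = t \<Longrightarrow> P t \<Longrightarrow>
            \<exists>d>0. \<forall>s\<in>T. t < s \<and> s < t + d \<longrightarrow> P s"
    and left_dense: "\<And>t. t \<in> T \<Longrightarrow> t0 < t \<Longrightarrow> (\<forall>d>0. \<exists>s\<in>T. t - d < s \<and> s < t) \<Longrightarrow>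
            (\<forall>s\<in>T. t0 \<le> s \<and> s < t \<longrightarrow> P s) \<Longrightarrow> P t"
    and t: "t \<in> T" "t0 \<le> t"
  shows "P t"
proof (rule ccontr)
  assume "\<not> P t"
  define F where "F = {s\<in>T. t0 \<le> s \<and> \<not> P s}"
  have F: "F \<noteq> {}" "bdd_below F" using t \<open>\<not> P t\<close> by (auto simp: F_def intro: bdd_belowI[of _ t0])
  define u where "u = Inf F"
  have uT: "u \<in> T" unfolding u_def
    by (rule closed_subset_contains_Inf[OF closed_T _ F]) (auto simp: F_def)
  have ut0: "t0 \<le> u" unfolding u_def by (rule cInf_greatest[OF F(1)]) (auto simp: F_def)
  have below: "\<forall>s\<in>T. t0 \<le> s \<and> s < u \<longrightarrow> P s"
  proof (intro ballI impI)
    fix s assume s: "s \<in> T" "t0 \<le> s \<and> s < u"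
    show "P s"
    proof (rule ccontr)
      assume "\<not> P s"
      with s have "u \<le> s" unfolding u_def by (intro cInf_lower[OF _ F(2)]) (auto simp: F_def)
      with s show False by simp
    qed
  qed
  have Pu: "P u" by (rule time_scale_induct_at[OF t0 P0 right_scattered left_dense uT ut0 below])
  have F_approx: "\<exists>f\<in>F. u < f \<and> f < u + e" if "e > 0" for e
  proof -
    have "Inf F < u + e" using that by (simp add: u_def)
    then obtain f where "f \<in> F" "f < u + e" using cInf_lessD[OF F(1)] by blast
    moreover have "u \<le> f" unfolding u_def by (rule cInf_lower[OF \<open>f\<in>F\<close> F(2)])
    moreover have "f \<noteq> u" using Pu \<open>f\<in>F\<close> by (auto simp: F_def)
    ultimately show ?thesis by force
  qed
  show False
  proof (cases "sigma T u = u")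
    case True
    from right_dense[OF uT ut0 True Pu] obtain d where "d > 0" "\<forall>s\<in>T. u < s \<and> s < u + d \<longrightarrow> P s"
      by auto
    moreover from F_approx[OF this(1)] obtain f where "f \<in> F" "u < f" "f < u + d" by auto
    ultimately show False by (auto simp: F_def)
  next
    case False
    then have "u < sigma T u" using sigma_ge[of u] by simp
    from F_approx[of "sigma T u - u"] this obtain f where "f \<in> F" "u < f" "f < sigma T u" by auto
    then show False using sigma_le[of f u] by (auto simp: F_def)
  qed
qed

end

section \<open>Delta derivatives\<close>

lemma has_delta_derivative_subset:
  assumes "has_delta_derivative S f v t" "S' \<subseteq> S" "sigma S' t = sigma S t"
  shows "has_delta_derivative S' f v t"
  using assms unfolding has_delta_derivative_def by (metis subsetD)

lemma has_delta_derivative_linear: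
  assumes L: "bounded_linear L" and f: "has_delta_derivative S f v t"
  shows "has_delta_derivative S (\<lambda>x. L (f x)) (L v) t"
  unfolding has_delta_derivative_def
proof (intro allI impI)
  fix e :: real assume "e > 0"
  obtain K where K: "K > 0" "\<And>x. norm (L x) \<le> norm x * K"
    using bounded_linear.pos_bounded[OF L] by blast
  with f \<open>e > 0\<close> obtain d where d: "d > 0" "\<forall>s\<in>S. \<bar>s - t\<bar> < d \<longrightarrow>
      norm (f (sigma S t) - f s - (sigma S t - s) *\<^sub>R v) \<le> (e / K) * \<bar>sigma S t - s\<bar>"
    unfolding has_delta_derivative_def by (meson divide_pos_pos)
  have "norm (L (f (sigma S t)) - L (f s) - (sigma S t - s) *\<^sub>R L v) \<le> e * \<bar>sigma S t - s\<bar>"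
    if "s \<in> S" "\<bar>s - t\<bar> < d" for s
  proof -
    have "L (f (sigma S t)) - L (f s) - (sigma S t - s) *\<^sub>R L v
          = L (f (sigma S t) - f s - (sigma S t - s) *\<^sub>R v)"
      using L by (simp add: linear_simps bounded_linear.linear)
    also have "norm \<dots> \<le> norm (f (sigma S t) - f s - (sigma S t - s) *\<^sub>R v) * K" by (rule K)
    also have "\<dots> \<le> (e / K) * \<bar>sigma S t - s\<bar> * K"
      using d that K by (intro mult_right_mono) auto
    finally show ?thesis using K by simp
  qed
  with d show "\<exists>d>0. \<forall>s\<in>S. \<bar>s - t\<bar> < d \<longrightarrow>
      norm (L (f (sigma S t)) - L (f s) - (sigma S t - s) *\<^sub>R L v) \<le> e * \<bar>sigma S t - s\<bar>"
    by blast
qed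

lemma has_delta_derivative_add:
  assumes f: "has_delta_derivative S f v t" and g: "has_delta_derivative S g w t"
  shows "has_delta_derivative S (\<lambda>x. f x + g x) (v + w) t"
  unfolding has_delta_derivative_def
proof (intro allI impI)
  fix e :: real assume "e > 0"
  from f \<open>e > 0\<close> obtain a where a: "a > 0" "\<forall>s\<in>S. \<bar>s - t\<bar> < a \<longrightarrow>
      norm (f (sigma S t) - f s - (sigma S t - s) *\<^sub>R v) \<le> (e/2) * \<bar>sigma S t - s\<bar>"
    unfolding has_delta_derivative_def by (meson half_gt_zero)
  from g \<open>e > 0\<close> obtain b where b: "b > 0" "\<forall>s\<in>S. \<bar>s - t\<bar> < b \<longrightarrow>
      norm (g (sigma S t) - g s - (sigma S t - s) *\<^sub>R w) \<le> (e/2) * \<bar>sigma S t - s\<bar>"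
    unfolding has_delta_derivative_def by (meson half_gt_zero)
  have "norm (f (sigma S t) + g (sigma S t) - (f s + g s) - (sigma S t - s) *\<^sub>R (v + w))
          \<le> e * \<bar>sigma S t - s\<bar>" if "s \<in> S" "\<bar>s - t\<bar> < min a b" for s
  proof -
    have "f (sigma S t) + g (sigma S t) - (f s + g s) - (sigma S t - s) *\<^sub>R (v + w) =
      (f (sigma S t) - f s - (sigma S t - s) *\<^sub>R v) + (g (sigma S t) - g s - (sigma S t - s) *\<^sub>R w)"
      by (simp add: algebra_simps)
    also have "norm \<dots> \<le> (e/2) * \<bar>sigma S t - s\<bar> + (e/2) * \<bar>sigma S t - s\<bar>"
      using a b that by (intro norm_triangle_le add_mono) auto
    finally show ?thesis by simp
  qed
  with a b show "\<exists>d>0. \<forall>s\<in>S. \<bar>s - t\<bar> < d \<longrightarrow>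
      norm (f (sigma S t) + g (sigma S t) - (f s + g s) - (sigma S t - s) *\<^sub>R (v + w))
        \<le> e * \<bar>sigma S t - s\<bar>"
    by (intro exI[of _ "min a b"]) auto
qed

lemma has_delta_derivative_cmult:
  fixes c :: "'a::real_normed_field"
  assumes "has_delta_derivative S f v t"
  shows "has_delta_derivative S (\<lambda>x. c * f x) (c * v) t"
  using has_delta_derivative_linear[OF bounded_linear_mult_right assms] .

lemma has_delta_derivative_diff:
  assumes "has_delta_derivative S f v t" "has_delta_derivative S g w t"
  shows "has_delta_derivative S (\<lambda>x. f x - g x) (v - w) t"
  using has_delta_derivative_add[OF assms(1)
      has_delta_derivative_linear[OF bounded_linear_minus[OF bounded_linear_ident] assms(2)]]
  by simp

lemma has_delta_derivative_jump:
  assumes f: "has_delta_derivative S f v t" and "t \<in> S"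
  shows "f (sigma S t) = f t + (sigma S t - t) *\<^sub>R v"
proof -
  define \<mu> where "\<mu> = \<bar>sigma S t - t\<bar>"
  have "norm (f (sigma S t) - f t - (sigma S t - t) *\<^sub>R v) \<le> 0 + e" if "e > 0" for e
  proof -
    have "e / (\<mu> + 1) > 0" using that by (simp add: \<mu>_def add_nonneg_pos)
    with f obtain d where "d > 0" "\<forall>s\<in>S. \<bar>s - t\<bar> < d \<longrightarrow>
        norm (f (sigma S t) - f s - (sigma S t - s) *\<^sub>R v) \<le> e / (\<mu> + 1) * \<bar>sigma S t - s\<bar>"
      unfolding has_delta_derivative_def by blast
    with \<open>t \<in> S\<close> have "norm (f (sigma S t) - f t - (sigma S t - t) *\<^sub>R v) \<le> e / (\<mu> + 1) * \<mu>"
      by (auto simp: \<mu>_def)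
    also have "\<dots> \<le> e" using that by (simp add: \<mu>_def field_simps)
    finally show ?thesis by simp
  qed
  then have "norm (f (sigma S t) - f t - (sigma S t - t) *\<^sub>R v) \<le> 0" by (rule field_le_epsilon)
  then show ?thesis by (simp add: algebra_simps)
qed

lemma has_delta_derivative_continuous:
  assumes f: "has_delta_derivative S f v t" and "t \<in> S" and "e > 0"
  shows "\<exists>d>0. \<forall>s\<in>S. \<bar>s - t\<bar> < d \<longrightarrow> norm (f s - f t) \<le> e"
proof -
  define \<mu> where "\<mu> = \<bar>sigma S t - t\<bar>"
  define e1 where "e1 = e / (2 * (2 * \<mu> + 1))"
  have e1: "e1 > 0" using \<open>e > 0\<close> by (simp add: e1_def \<mu>_def add_nonneg_pos)
  from f e1 obtain a where a: "a > 0" "\<forall>s\<in>S. \<bar>s - t\<bar> < a \<longrightarrow>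
      norm (f (sigma S t) - f s - (sigma S t - s) *\<^sub>R v) \<le> e1 * \<bar>sigma S t - s\<bar>"
    unfolding has_delta_derivative_def by blast
  define N where "N = norm v + e1"
  have N: "N \<ge> 0" using e1 by (simp add: N_def)
  define d where "d = min (min a 1) (e / (2 * (N + 1)))"
  have "d > 0" using a \<open>e > 0\<close> N by (simp add: d_def add_nonneg_pos)
  moreover have "norm (f s - f t) \<le> e" if s: "s \<in> S" "\<bar>s - t\<bar> < d" for s
  proof -
    have "f s - f t = (f (sigma S t) - f t - (sigma S t - t) *\<^sub>R v)
       - (f (sigma S t) - f s - (sigma S t - s) *\<^sub>R v) + (s - t) *\<^sub>R v"
      by (simp add: algebra_simps)
    also have "norm \<dots> \<le> e1 * \<mu> + e1 * \<bar>sigma S t - s\<bar> + \<bar>s - t\<bar> * norm v"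
    proof -
      have "norm (f (sigma S t) - f t - (sigma S t - t) *\<^sub>R v) \<le> e1 * \<mu>"
        "norm (f (sigma S t) - f s - (sigma S t - s) *\<^sub>R v) \<le> e1 * \<bar>sigma S t - s\<bar>"
        using a \<open>t \<in> S\<close> s by (auto simp: \<mu>_def d_def)
      then show ?thesis
        using norm_triangle_ineq[of "f (sigma S t) - f t - (sigma S t - t) *\<^sub>R v
            - (f (sigma S t) - f s - (sigma S t - s) *\<^sub>R v)" "(s - t) *\<^sub>R v"]
          norm_triangle_ineq4[of "f (sigma S t) - f t - (sigma S t - t) *\<^sub>R v"
            "f (sigma S t) - f s - (sigma S t - s) *\<^sub>R v"]
        by simp
    qed
    also have "\<dots> \<le> e1 * (2 * \<mu> + 1) + \<bar>s - t\<bar> * N"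
    proof -
      have "e1 * \<bar>sigma S t - s\<bar> \<le> e1 * (\<mu> + \<bar>s - t\<bar>)" using e1 by (intro mult_left_mono) (auto simp: \<mu>_def)
      moreover have "\<bar>s - t\<bar> \<le> 1" using s by (auto simp: d_def)
      ultimately show ?thesis using e1 by (simp add: N_def algebra_simps)
    qed
    also have "\<dots> \<le> e / 2 + e / 2"
    proof (rule add_mono)
      have "2 * \<mu> + 1 > 0" by (simp add: \<mu>_def add_nonneg_pos)
      then show "e1 * (2 * \<mu> + 1) \<le> e / 2" unfolding e1_def by (simp add: field_simps)
      have "\<bar>s - t\<bar> * N \<le> e / (2 * (N + 1)) * (N + 1)"
        using s N by (intro mult_mono) (auto simp: d_def)
      also have "\<dots> = e / 2" using N by (simp add: field_simps)
      finally show "\<bar>s - t\<bar> * N \<le> e / 2" .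
    qed
    finally show ?thesis by simp
  qed
  ultimately show ?thesis by blast
qed

section \<open>Gronwall's inequality\<close>

definition is_inhomogeneous_solution ::
  "real set \<Rightarrow> complex \<Rightarrow> (real \<Rightarrow> complex) \<Rightarrow> real \<Rightarrow> (real \<Rightarrow> complex) \<Rightarrow> bool" where
  "is_inhomogeneous_solution T l f t0 y \<longleftrightarrow>
     (\<forall>t\<in>T. t0 \<le> t \<longrightarrow> has_delta_derivative (T \<inter> {t0..}) y (l * y t + f t) t)"

lemma norm_euler_step:
  fixes a b l :: "'a::real_normed_field"
  assumes "h \<ge> 0"
  shows "norm (a + of_real h * (l * a + b)) \<le> norm a + h * (norm l * norm a + norm b)"
proof -
  have "norm (of_real h * (l * a + b)) \<le> h * (norm l * norm a + norm b)"
    using assms norm_triangle_ineq[of "l * a" b] by (simp add: norm_mult mult_left_mono)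
  then show ?thesis using norm_triangle_ineq[of a "of_real h * (l * a + b)"] by linarith
qed

lemma exp_growth_step:
  fixes a G x h :: real
  assumes "a \<ge> 0" "G \<ge> 0" "x \<ge> 0" "h \<ge> 0"
  shows "G * exp ((a + 1) * x) + h * (a * (G * exp ((a + 1) * x)) + G) \<le> G * exp ((a + 1) * (x + h))"
proof -
  define E where "E = G * exp ((a + 1) * x)"
  have "1 \<le> exp ((a + 1) * x)" using assms by simp
  then have "G \<le> E" using assms mult_left_mono[of 1 _ G] by (simp add: E_def)
  then have "h * G \<le> h * E" using assms by (simp add: mult_left_mono)
  have "G * exp ((a + 1) * x) + h * (a * (G * exp ((a + 1) * x)) + G) = E + h * (a * E + G)"
    by (simp add: E_def)
  also have "\<dots> \<le> E * (1 + (a + 1) * h)"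
    using \<open>h * G \<le> h * E\<close> by (simp add: algebra_simps)
  also have "\<dots> \<le> E * exp ((a + 1) * h)"
    using assms by (intro mult_left_mono exp_ge_add_one_self) (simp add: E_def)
  also have "\<dots> = G * exp ((a + 1) * (x + h))"
    by (simp add: E_def distrib_left exp_add)
  finally show ?thesis .
qed

text \<open>The comparison function of Gronwall's inequality; the slack \<open>\<epsilon>\<close> is needed at
  right-dense points, where the derivative only controls \<open>p\<close> up to an \<open>o(h)\<close> error.\<close>

definition gronwall_majorant :: "complex \<Rightarrow> real \<Rightarrow> real \<Rightarrow> real \<Rightarrow> real \<Rightarrow> real" where
  "gronwall_majorant l F \<epsilon> t1 \<tau> = (F + \<epsilon>) * exp ((norm l + 1) * (\<tau> - t1)) - F"

context unbounded_time_scale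
begin

context
  fixes l :: complex and f p :: "real \<Rightarrow> complex" and t1 t F \<epsilon> :: real
  assumes t1: "t1 \<in> T" and sol: "is_inhomogeneous_solution T l f t1 p"
    and F: "F \<ge> 0" and f_bound: "\<forall>\<tau>\<in>T. t1 \<le> \<tau> \<and> \<tau> \<le> t \<longrightarrow> norm (f \<tau>) \<le> F"
    and eps: "\<epsilon> > 0"
begin

lemma gronwall_majorant_mono: "a \<le> b \<Longrightarrow> gronwall_majorant l F \<epsilon> t1 a \<le> gronwall_majorant l F \<epsilon> t1 b"
  using F eps by (simp add: gronwall_majorant_def mult_left_mono)

lemma inhomogeneous_solution_deriv: "\<tau> \<in> T \<Longrightarrow> t1 \<le> \<tau> \<Longrightarrow> has_delta_derivative (T \<inter> {t1..}) p (l * p \<tau> + f \<tau>) \<tau>"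
  using sol unfolding is_inhomogeneous_solution_def by auto

lemma gronwall_majorant_euler_step:
  assumes "t1 \<le> \<tau>" "h \<ge> 0" "norm (p \<tau>) \<le> gronwall_majorant l F \<epsilon> t1 \<tau>" "norm (f \<tau>) \<le> F"
  shows "norm (p \<tau> + of_real h * (l * p \<tau> + f \<tau>)) + \<epsilon> * h \<le> gronwall_majorant l F \<epsilon> t1 (\<tau> + h)"
proof -
  define E where "E = (F + \<epsilon>) * exp ((norm l + 1) * (\<tau> - t1))"
  have "norm l * norm (p \<tau>) + norm (f \<tau>) \<le> norm l * E + F"
    using assms F by (intro add_mono mult_left_mono) (auto simp: gronwall_majorant_def E_def)
  then have "h * (norm l * norm (p \<tau>) + norm (f \<tau>)) \<le> h * (norm l * E + F)"
    using \<open>h \<ge> 0\<close> by (rule mult_left_mono)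
  then have "norm (p \<tau> + of_real h * (l * p \<tau> + f \<tau>)) + \<epsilon> * h
      \<le> gronwall_majorant l F \<epsilon> t1 \<tau> + h * (norm l * E + F) + \<epsilon> * h"
    using norm_euler_step[OF \<open>h \<ge> 0\<close>, of "p \<tau>" l "f \<tau>"] assms by linarith
  also have "\<dots> = gronwall_majorant l F \<epsilon> t1 \<tau> + h * (norm l * E + (F + \<epsilon>))"
    by (simp add: algebra_simps)
  also have "\<dots> \<le> gronwall_majorant l F \<epsilon> t1 (\<tau> + h)"
    using exp_growth_step[of "norm l" "F + \<epsilon>" "\<tau> - t1" h] assms F eps
    by (simp add: gronwall_majorant_def E_def algebra_simps)
  finally show ?thesis .
qed

lemma gronwall_majorant_jump:
  assumes \<tau>: "\<tau> \<in> T" "t1 \<le> \<tau>" "sigma T \<tau> \<le> t"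
    and IH: "norm (p \<tau>) \<le> gronwall_majorant l F \<epsilon> t1 \<tau>"
  shows "norm (p (sigma T \<tau>)) \<le> gronwall_majorant l F \<epsilon> t1 (sigma T \<tau>)"
proof -
  define \<mu> where "\<mu> = sigma T \<tau> - \<tau>"
  have "\<mu> \<ge> 0" using sigma_ge[of \<tau>] by (simp add: \<mu>_def)
  have "p (sigma T \<tau>) = p \<tau> + of_real \<mu> * (l * p \<tau> + f \<tau>)"
    using has_delta_derivative_jump[OF inhomogeneous_solution_deriv[OF \<tau>(1,2)]] \<tau> sigma_restrict[OF \<tau>(2)]
    by (simp add: \<mu>_def scaleR_conv_of_real)
  moreover have "norm (f \<tau>) \<le> F" using f_bound \<tau> sigma_ge[of \<tau>] by auto
  ultimately have "norm (p (sigma T \<tau>)) + \<epsilon> * \<mu> \<le> gronwall_majorant l F \<epsilon> t1 (sigma T \<tau>)"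
    using gronwall_majorant_euler_step[OF \<tau>(2) \<open>\<mu> \<ge> 0\<close> IH] by (simp add: \<mu>_def)
  then show ?thesis using mult_nonneg_nonneg[of \<epsilon> \<mu>] eps \<open>\<mu> \<ge> 0\<close> by linarith
qed

lemma gronwall_majorant_right_dense:
  assumes \<tau>: "\<tau> \<in> T" "t1 \<le> \<tau>" "sigma T \<tau> = \<tau>" "\<tau> \<le> t"
    and IH: "norm (p \<tau>) \<le> gronwall_majorant l F \<epsilon> t1 \<tau>"
  shows "\<exists>d>0. \<forall>s\<in>T. \<tau> < s \<and> s < \<tau> + d \<longrightarrow> norm (p s) \<le> gronwall_majorant l F \<epsilon> t1 s"
proof -
  have "sigma (T \<inter> {t1..}) \<tau> = \<tau>" using sigma_restrict[OF \<tau>(2)] \<tau>(3) by simp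
  with inhomogeneous_solution_deriv[OF \<tau>(1,2)] eps obtain d where d: "d > 0" "\<forall>s\<in>T \<inter> {t1..}. \<bar>s - \<tau>\<bar> < d \<longrightarrow>
      norm (p \<tau> - p s - (\<tau> - s) *\<^sub>R (l * p \<tau> + f \<tau>)) \<le> \<epsilon> * \<bar>\<tau> - s\<bar>"
    unfolding has_delta_derivative_def by metis
  have "norm (p s) \<le> gronwall_majorant l F \<epsilon> t1 s" if s: "s \<in> T" "\<tau> < s" "s < \<tau> + d" for s
  proof -
    define h where "h = s - \<tau>"
    have "s \<in> T \<inter> {t1..}" "\<bar>s - \<tau>\<bar> < d" using s \<tau> by auto
    from d(2)[rule_format, OF this]
    have "norm (p \<tau> - p s - (\<tau> - s) *\<^sub>R (l * p \<tau> + f \<tau>)) \<le> \<epsilon> * h"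
      using s by (simp add: h_def)
    moreover have "p s = (p \<tau> + of_real h * (l * p \<tau> + f \<tau>)) - (p \<tau> - p s - (\<tau> - s) *\<^sub>R (l * p \<tau> + f \<tau>))"
      by (simp add: h_def scaleR_conv_of_real algebra_simps)
    ultimately have "norm (p s) \<le> norm (p \<tau> + of_real h * (l * p \<tau> + f \<tau>)) + \<epsilon> * h"
      by (metis add_left_mono norm_triangle_ineq4 order_trans)
    also have "\<dots> \<le> gronwall_majorant l F \<epsilon> t1 s"
      using gronwall_majorant_euler_step[OF \<tau>(2) _ IH, of h] f_bound \<tau> s by (simp add: h_def)
    finally show ?thesis .
  qed
  with d(1) show ?thesis by blast
qed

lemma gronwall_majorant_left_dense:
  assumes \<tau>: "\<tau> \<in> T" "t1 < \<tau>" "\<tau> \<le> t" and left_dense: "\<forall>d>0. \<exists>s\<in>T. \<tau> - d < s \<and> s < \<tau>"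
    and IH: "\<forall>s\<in>T. t1 \<le> s \<and> s < \<tau> \<longrightarrow> norm (p s) \<le> gronwall_majorant l F \<epsilon> t1 s"
  shows "norm (p \<tau>) \<le> gronwall_majorant l F \<epsilon> t1 \<tau>"
proof (rule field_le_epsilon)
  fix \<eta> :: real assume "\<eta> > 0"
  from has_delta_derivative_continuous[OF inhomogeneous_solution_deriv[of \<tau>] _ this] \<tau> obtain d where d: "d > 0"
    "\<forall>s\<in>T \<inter> {t1..}. \<bar>s - \<tau>\<bar> < d \<longrightarrow> norm (p s - p \<tau>) \<le> \<eta>" by auto
  from left_dense d \<tau> obtain s where s: "s \<in> T" "\<tau> - min d (\<tau> - t1) < s" "s < \<tau>"
    by (meson min_less_iff_conj diff_gt_0_iff_gt)
  have "s \<in> T \<inter> {t1..}" "\<bar>s - \<tau>\<bar> < d" using s by auto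
  from d(2)[rule_format, OF this] have "norm (p \<tau>) \<le> norm (p s) + \<eta>"
    using norm_triangle_ineq2[of "p \<tau>" "p s"] by (simp add: norm_minus_commute)
  also have "norm (p s) \<le> gronwall_majorant l F \<epsilon> t1 \<tau>"
    using IH s gronwall_majorant_mono[of s \<tau>] by auto
  finally show "norm (p \<tau>) \<le> gronwall_majorant l F \<epsilon> t1 \<tau> + \<eta>" by simp
qed

lemma gronwall_eps:
  assumes "p t1 = 0" and "t \<in> T" "t1 \<le> t"
  shows "norm (p t) \<le> gronwall_majorant l F \<epsilon> t1 t"
proof -
  have "\<tau> \<le> t \<longrightarrow> norm (p \<tau>) \<le> gronwall_majorant l F \<epsilon> t1 \<tau>" if "\<tau> \<in> T" "t1 \<le> \<tau>" for \<tau>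
  proof (rule time_scale_induct[OF t1 _ _ _ _ that])
    show "t1 \<le> t \<longrightarrow> norm (p t1) \<le> gronwall_majorant l F \<epsilon> t1 t1"
      using \<open>p t1 = 0\<close> eps by (simp add: gronwall_majorant_def)
  next
    show "sigma T \<tau> \<le> t \<longrightarrow> norm (p (sigma T \<tau>)) \<le> gronwall_majorant l F \<epsilon> t1 (sigma T \<tau>)"
      if "\<tau> \<in> T" "t1 \<le> \<tau>" "\<tau> < sigma T \<tau>" "\<tau> \<le> t \<longrightarrow> norm (p \<tau>) \<le> gronwall_majorant l F \<epsilon> t1 \<tau>"
      for \<tau>
      using that gronwall_majorant_jump[of \<tau>] by auto
  next
    show "\<exists>d>0. \<forall>s\<in>T. \<tau> < s \<and> s < \<tau> + d \<longrightarrow> s \<le> t \<longrightarrow> norm (p s) \<le> gronwall_majorant l F \<epsilon> t1 s"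
      if "\<tau> \<in> T" "t1 \<le> \<tau>" "sigma T \<tau> = \<tau>" "\<tau> \<le> t \<longrightarrow> norm (p \<tau>) \<le> gronwall_majorant l F \<epsilon> t1 \<tau>"
      for \<tau>
    proof (cases "\<tau> \<le> t")
      case True
      with gronwall_majorant_right_dense[of \<tau>] that show ?thesis by blast
    qed (auto intro: exI[of _ 1])
  next
    show "\<tau> \<le> t \<longrightarrow> norm (p \<tau>) \<le> gronwall_majorant l F \<epsilon> t1 \<tau>"
      if "\<tau> \<in> T" "t1 < \<tau>" "\<forall>d>0. \<exists>s\<in>T. \<tau> - d < s \<and> s < \<tau>"
        "\<forall>s\<in>T. t1 \<le> s \<and> s < \<tau> \<longrightarrow> s \<le> t \<longrightarrow> norm (p s) \<le> gronwall_majorant l F \<epsilon> t1 s"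
      for \<tau>
      using that gronwall_majorant_left_dense[of \<tau>] by auto
  qed
  with assms show ?thesis by blast
qed

end

lemma gronwall:
  assumes "t1 \<in> T" "is_inhomogeneous_solution T l f t1 p" "p t1 = 0" "F \<ge> 0"
    and "\<forall>\<tau>\<in>T. t1 \<le> \<tau> \<and> \<tau> \<le> t \<longrightarrow> norm (f \<tau>) \<le> F"
    and "t \<in> T" "t1 \<le> t"
  shows "norm (p t) \<le> F * exp ((norm l + 1) * (t - t1))"
proof (rule field_le_epsilon)
  fix e :: real assume "e > 0"
  define E where "E = exp ((norm l + 1) * (t - t1))"
  have "E > 0" by (simp add: E_def)
  then have "norm (p t) \<le> (F + e / E) * E - F"
    using gronwall_eps[OF assms(1,2,4,5) _ assms(3,6,7), of "e / E"] \<open>e > 0\<close>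
    by (simp add: E_def gronwall_majorant_def)
  also have "\<dots> \<le> F * E + e" using \<open>E > 0\<close> \<open>F \<ge> 0\<close> by (simp add: field_simps)
  finally show "norm (p t) \<le> F * exp ((norm l + 1) * (t - t1)) + e" by (simp add: E_def)
qed

end

section \<open>The exponential function of a time scale\<close>

lemma norm_exp_minus_one_minus_le:
  fixes z :: complex
  assumes "norm z \<le> 1/2"
  shows "norm (exp z - 1 - z) \<le> 2 * norm z ^ 2"
proof -
  have "norm (exp z - 1 - z) \<le> exp (norm z) * norm z ^ 2"
    using Taylor_exp_field[of z 1] by (simp add: eval_nat_numeral diff_diff_eq)
  also have "exp (norm z) \<le> 2"
    using assms exp_half_le2 by (meson exp_le_cancel_iff order_trans)
  finally show ?thesis by (simp add: mult_right_mono)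
qed

lemma norm_Ln_one_plus_minus_le:
  fixes w :: complex
  assumes "norm w \<le> 1/2"
  shows "norm (Ln (1 + w) - w) \<le> 2 * norm w ^ 2"
proof -
  have "norm (Ln (1 + w) - w) \<le> norm w ^ 2 / (1 - norm w)"
    using Ln_approx_linear[of w] assms by simp
  also have "\<dots> \<le> norm w ^ 2 / (1/2)"
    using assms by (intro divide_left_mono) auto
  finally show ?thesis by simp
qed

lemma norm_exp_local_error:
  fixes I l :: complex and h :: real
  assumes "norm (I - of_real h * l) \<le> 2 * norm l ^ 2 * h ^ 2" "norm I \<le> 2 * norm l * \<bar>h\<bar>"
    and "norm I \<le> 1/2"
  shows "norm (exp I - 1 - of_real h * l) \<le> 10 * norm l ^ 2 * h ^ 2"
    and "norm (exp (- I) - 1 + of_real h * l) \<le> 10 * norm l ^ 2 * h ^ 2"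
proof -
  have "norm I ^ 2 \<le> (2 * norm l * \<bar>h\<bar>) ^ 2" using assms(2) by (intro power_mono) auto
  then have sq: "2 * norm I ^ 2 \<le> 8 * norm l ^ 2 * h ^ 2" by (simp add: power_mult_distrib mult_ac)
  have "exp I - 1 - of_real h * l = (exp I - 1 - I) + (I - of_real h * l)" by simp
  then have "norm (exp I - 1 - of_real h * l) \<le> norm (exp I - 1 - I) + norm (I - of_real h * l)"
    by (metis norm_triangle_ineq)
  then show "norm (exp I - 1 - of_real h * l) \<le> 10 * norm l ^ 2 * h ^ 2"
    using norm_exp_minus_one_minus_le[OF assms(3)] assms(1) sq by linarith
  have "exp (- I) - 1 + of_real h * l = (exp (- I) - 1 - (- I)) - (I - of_real h * l)" by simp
  then have "norm (exp (- I) - 1 + of_real h * l) \<le> norm (exp (- I) - 1 - (- I)) + norm (I - of_real h * l)"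
    by (metis norm_triangle_ineq4)
  moreover have "norm (exp (- I) - 1 - (- I)) \<le> 2 * norm I ^ 2"
    using norm_exp_minus_one_minus_le[of "- I"] assms(3) by simp
  ultimately show "norm (exp (- I) - 1 + of_real h * l) \<le> 10 * norm l ^ 2 * h ^ 2"
    using assms(1) sq by linarith
qed

lemma finite_separated_subset:
  fixes S :: "real set"
  assumes "S \<subseteq> {a..b}" "c > 0" "\<And>x y. x \<in> S \<Longrightarrow> y \<in> S \<Longrightarrow> x < y \<Longrightarrow> c \<le> y - x"
  shows "finite S"
proof -
  define f where "f x = \<lfloor>(x - a) / c\<rfloor>" for x
  have "inj_on f S"
  proof (rule inj_onI)
    fix x y assume xy: "x \<in> S" "y \<in> S" "f x = f y"
    have "\<bar>(x - a)/c - (y - a)/c\<bar> < 1" using xy(3) unfolding f_def by linarith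
    then have "\<bar>x - y\<bar> < c" using assms(2) by (simp add: field_simps abs_less_iff)
    then show "x = y"
      using assms(3)[OF xy(1,2)] assms(3)[OF xy(2,1)] by (cases x y rule: linorder_cases) auto
  qed
  moreover have "f ` S \<subseteq> {0..\<lceil>(b - a)/c\<rceil>}"
  proof
    fix k assume "k \<in> f ` S"
    then obtain x where x: "x \<in> S" "k = f x" by auto
    then have "a \<le> x" "x \<le> b" using assms(1) by auto
    then show "k \<in> {0..\<lceil>(b - a)/c\<rceil>}" using assms(2) x unfolding f_def
      by (auto intro!: floor_le_ceiling[THEN order_trans] divide_right_mono ceiling_mono)
  qed
  then have "finite (f ` S)" using finite_subset by blast
  ultimately show ?thesis using finite_imageD by blast
qed

text \<open>\<open>ts_exp T l s t\<close> is \<open>exp\<close> of the integral over \<open>[s, t]\<close> of the cylinder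
  transformation \<open>Ln (1 + m l) / m\<close>, taken at the graininess \<open>m\<close> of the last point of \<open>T\<close>
  before the integration variable: over a gap of length \<open>m\<close> it integrates to \<open>Ln (1 + m l)\<close>,
  i.e.\ to the factor \<open>1 + m l\<close>.  Gaps on which this logarithm is not close to \<open>m l\<close> (possibly
  \<open>1 + m l = 0\<close>) are left out of the integral and contribute an explicit factor instead; there
  are finitely many of them on bounded intervals.\<close>

definition last_point :: "real set \<Rightarrow> real \<Rightarrow> real \<Rightarrow> real" where
  "last_point T s r = Sup {\<tau>\<in>T. \<tau> \<le> max r s}"

definition local_graininess :: "real set \<Rightarrow> real \<Rightarrow> real \<Rightarrow> real" where
  "local_graininess T s r = sigma T (last_point T s r) - last_point T s r"

definition small_gap_bound :: "complex \<Rightarrow> real" where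
  "small_gap_bound l = 1 / (4 * norm l + 1)"

definition cylinder :: "complex \<Rightarrow> real \<Rightarrow> complex" where
  "cylinder l m =
     (if m \<in> {0<..<small_gap_bound l} then Ln (1 + of_real m * l) / of_real m
      else if m = 0 then l else 0)"

definition cylinder_density :: "real set \<Rightarrow> complex \<Rightarrow> real \<Rightarrow> real \<Rightarrow> complex" where
  "cylinder_density T l s r = cylinder l (local_graininess T s r)"

definition large_gaps :: "real set \<Rightarrow> complex \<Rightarrow> real set" where
  "large_gaps T l = {\<tau>\<in>T. small_gap_bound l \<le> sigma T \<tau> - \<tau>}"

definition large_gap_product :: "real set \<Rightarrow> complex \<Rightarrow> real \<Rightarrow> real \<Rightarrow> complex" where
  "large_gap_product T l s t = (\<Prod>\<tau>\<in>large_gaps T l \<inter> {s..<t}. 1 + of_real (sigma T \<tau> - \<tau>) * l)"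

definition ts_exp :: "real set \<Rightarrow> complex \<Rightarrow> real \<Rightarrow> real \<Rightarrow> complex" where
  "ts_exp T l s t = exp (integral {s..t} (cylinder_density T l s)) * large_gap_product T l s t"

lemma small_gap_bound_pos: "small_gap_bound l > 0"
  by (simp add: small_gap_bound_def add_nonneg_pos)

lemma small_gap_bound_mult_le: "small_gap_bound l * norm l \<le> 1/4"
proof -
  have "0 < 4 * norm l + 1" by (simp add: add_nonneg_pos)
  then show ?thesis by (simp add: small_gap_bound_def field_simps)
qed

lemma norm_mult_le_quarter:
  assumes "0 \<le> m" "m \<le> small_gap_bound l"
  shows "norm (of_real m * l) \<le> 1/4"
proof -
  have "m * norm l \<le> small_gap_bound l * norm l" using assms by (intro mult_right_mono) auto
  also have "\<dots> \<le> 1/4" by (rule small_gap_bound_mult_le)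
  finally show ?thesis using assms by (simp add: norm_mult)
qed

lemma norm_cylinder_minus_le:
  assumes "0 \<le> m" "m < small_gap_bound l"
  shows "norm (cylinder l m - l) \<le> 2 * norm l ^ 2 * m"
proof (cases "m = 0")
  case False
  then have "m > 0" using assms by simp
  have "norm (cylinder l m - l) = norm (Ln (1 + of_real m * l) - of_real m * l) / m"
    using \<open>m > 0\<close> assms by (simp add: cylinder_def norm_divide field_simps)
  also have "\<dots> \<le> 2 * norm (of_real m * l) ^ 2 / m"
    using norm_Ln_one_plus_minus_le[of "of_real m * l"] norm_mult_le_quarter[of m l] assms \<open>m > 0\<close>
    by (intro divide_right_mono) auto
  also have "\<dots> = 2 * norm l ^ 2 * m" using \<open>m > 0\<close> by (simp add: norm_mult power2_eq_square)
  finally show ?thesis .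
qed (simp add: cylinder_def)

lemma norm_cylinder_le:
  assumes "0 \<le> m"
  shows "norm (cylinder l m) \<le> 2 * norm l"
proof (cases "m < small_gap_bound l")
  case True
  have "2 * norm l ^ 2 * m = 2 * norm l * (norm (of_real m * l))"
    using assms by (simp add: power2_eq_square norm_mult)
  also have "\<dots> \<le> 2 * norm l * (1/4)"
    using norm_mult_le_quarter[of m l] assms True by (intro mult_left_mono) auto
  finally have "2 * norm l ^ 2 * m \<le> 2 * norm l * (1/4)" .
  then have "norm (cylinder l m - l) \<le> norm l"
    using norm_cylinder_minus_le[OF assms True] norm_ge_zero[of l] by linarith
  then show ?thesis using norm_triangle_ineq2[of "cylinder l m" l] by simp
qed (simp add: cylinder_def)

lemma cylinder_measurable: "cylinder l \<in> borel_measurable borel"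
proof -
  define F1 where "F1 m = (if m \<in> {0<..<small_gap_bound l} then Ln (1 + of_real m * l) / of_real m else 0)"
    for m
  define F2 where "F2 m = (if m \<in> {0} then l else 0)" for m :: real
  have "continuous_on {0<..<small_gap_bound l} (\<lambda>m. Ln (1 + of_real m * l) / of_real m)"
  proof (intro continuous_intros)
    fix m assume m: "m \<in> {0<..<small_gap_bound l}"
    have "Re (of_real m * l) \<ge> -1/4"
      using norm_mult_le_quarter[of m l] m abs_Re_le_cmod[of "of_real m * l"] by auto
    then show "1 + complex_of_real m * l \<notin> \<real>\<^sub>\<le>\<^sub>0" by (simp add: complex_nonpos_Reals_iff)
  qed auto
  then have "F1 \<in> borel_measurable borel" unfolding F1_def
    by (intro borel_measurable_continuous_on_if) auto
  moreover have "F2 \<in> borel_measurable borel" unfolding F2_def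
    by (intro borel_measurable_continuous_on_if) auto
  ultimately have "(\<lambda>m. if m \<in> {0<..<small_gap_bound l} then F1 m else F2 m) \<in> borel_measurable borel"
    by (intro measurable_If_set) auto
  also have "(\<lambda>m. if m \<in> {0<..<small_gap_bound l} then F1 m else F2 m) = cylinder l"
    by (auto simp: F1_def F2_def cylinder_def fun_eq_iff)
  finally show ?thesis .
qed

context unbounded_time_scale
begin

context
  fixes s :: real and l :: complex
  assumes s_in_T: "s \<in> T"
begin

lemma last_point_in_T: "last_point T s r \<in> T"
  and last_point_le: "last_point T s r \<le> max r s"
  and le_last_point: "\<tau> \<in> T \<Longrightarrow> \<tau> \<le> max r s \<Longrightarrow> \<tau> \<le> last_point T s r"
proof -
  have ne: "{\<tau>\<in>T. \<tau> \<le> max r s} \<noteq> {}" using s_in_T by auto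
  have bd: "bdd_above {\<tau>\<in>T. \<tau> \<le> max r s}" by (auto intro: bdd_aboveI[of _ "max r s"])
  have "closed {\<tau>\<in>T. \<tau> \<le> max r s}"
    using closed_Int[OF closed_T closed_atMost[of "max r s"]] by (simp add: Int_def atMost_def)
  then show "last_point T s r \<in> T" using closed_contains_Sup[OF ne bd] by (simp add: last_point_def)
  show "last_point T s r \<le> max r s" unfolding last_point_def by (rule cSup_least[OF ne]) auto
  show "\<tau> \<in> T \<Longrightarrow> \<tau> \<le> max r s \<Longrightarrow> \<tau> \<le> last_point T s r"
    unfolding last_point_def by (rule cSup_upper[OF _ bd]) auto
qed

lemma mono_last_point: "mono (last_point T s)"
proof (rule monoI)
  fix a b :: real assume "a \<le> b"
  then show "last_point T s a \<le> last_point T s b"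
    using last_point_in_T last_point_le[of a] by (intro le_last_point) auto
qed

lemma local_graininess_nonneg: "local_graininess T s r \<ge> 0"
  using sigma_ge[of "last_point T s r"] by (simp add: local_graininess_def)

lemma local_graininess_le:
  assumes "u \<in> T" "v \<in> T" "s \<le> u" "u \<le> r" "r < v"
  shows "local_graininess T s r \<le> v - u"
proof -
  have "u \<le> last_point T s r" using le_last_point[of u r] assms by simp
  moreover have "sigma T (last_point T s r) \<le> v"
    using last_point_le[of r] assms by (intro sigma_le) auto
  ultimately show ?thesis by (simp add: local_graininess_def)
qed

lemma local_graininess_in_gap:
  assumes "\<tau> \<in> T" "s \<le> \<tau>" "\<tau> \<le> r" "r < sigma T \<tau>"
  shows "local_graininess T s r = sigma T \<tau> - \<tau>"
proof -
  have "\<tau> \<le> last_point T s r" using le_last_point[of \<tau> r] assms by simp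
  moreover have "\<not> \<tau> < last_point T s r"
    using sigma_le[OF last_point_in_T, of \<tau> r] last_point_le[of r] assms by auto
  ultimately show ?thesis by (simp add: local_graininess_def)
qed

lemma norm_cylinder_density_le: "norm (cylinder_density T l s r) \<le> 2 * norm l"
  using norm_cylinder_le[OF local_graininess_nonneg] by (simp add: cylinder_density_def)

lemma cylinder_density_integrable: "cylinder_density T l s integrable_on {a..b}"
proof -
  have "mono (\<lambda>r. sigma T (last_point T s r))"
    using mono_last_point mono_sigma by (auto simp: mono_def)
  then have "local_graininess T s \<in> borel_measurable borel"
    unfolding local_graininess_def[abs_def]
    using borel_measurable_mono[OF mono_last_point] borel_measurable_mono by measurable
  then have "cylinder_density T l s \<in> borel_measurable borel"
    unfolding cylinder_density_def[abs_def]
    using measurable_comp[OF _ cylinder_measurable] by (simp add: comp_def)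
  then have "cylinder_density T l s \<in> borel_measurable lebesgue"
    using measurable_comp[OF id_borel_measurable_lebesgue] by (simp add: comp_def id_def)
  then have "cylinder_density T l s integrable_on cbox a b"
    by (rule measurable_bounded_lemma[where g = "\<lambda>_. 2 * norm l"])
       (auto intro: norm_cylinder_density_le)
  then show ?thesis by simp
qed

lemma integral_cylinder_density_short:
  assumes "u \<in> T" "v \<in> T" "s \<le> u" "u \<le> v" "v - u < small_gap_bound l"
  shows "norm (integral {u..v} (cylinder_density T l s) - of_real (v - u) * l) \<le> 2 * norm l ^ 2 * (v - u) ^ 2"
    and "norm (integral {u..v} (cylinder_density T l s)) \<le> 2 * norm l * (v - u)"
    and "norm (integral {u..v} (cylinder_density T l s)) \<le> 1/2"
proof -
  have int: "((\<lambda>r. cylinder_density T l s r - l) has_integral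
      (integral {u..v} (cylinder_density T l s) - of_real (v - u) * l)) {u..v}"
    using has_integral_diff[OF integrable_integral[OF cylinder_density_integrable]
        has_integral_const_real[of l u v]] assms
    by (simp add: scaleR_conv_of_real)
  have B: "0 \<le> 2 * norm l ^ 2 * (v - u)" using assms by simp
  have fin: "finite {v}" by simp
  have pointwise: "norm (cylinder_density T l s r - l) \<le> 2 * norm l ^ 2 * (v - u)"
    if "r \<in> {u..v} - {v}" for r
  proof -
    have g: "local_graininess T s r \<le> v - u" using local_graininess_le[of u v r] assms that by auto
    then have "norm (cylinder_density T l s r - l) \<le> 2 * norm l ^ 2 * local_graininess T s r"
      using norm_cylinder_minus_le[OF local_graininess_nonneg, of r l] assms
      by (simp add: cylinder_density_def)
    also have "\<dots> \<le> 2 * norm l ^ 2 * (v - u)" using g by (intro mult_left_mono) auto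
    finally show ?thesis .
  qed
  have "norm (integral {u..v} (cylinder_density T l s) - of_real (v - u) * l)
      \<le> 2 * norm l ^ 2 * (v - u) * (v - u)"
    using has_integral_bound_real[OF B fin int pointwise] assms
    by (simp add: content_real)
  then show "norm (integral {u..v} (cylinder_density T l s) - of_real (v - u) * l) \<le> 2 * norm l ^ 2 * (v - u) ^ 2"
    by (simp add: power2_eq_square mult_ac)
  show I: "norm (integral {u..v} (cylinder_density T l s)) \<le> 2 * norm l * (v - u)"
    using has_integral_bound_real[OF _ _ integrable_integral[OF cylinder_density_integrable],
        of "2 * norm l" "{}" u v] norm_cylinder_density_le assms
    by simp
  also have "\<dots> \<le> 2 * (small_gap_bound l * norm l)"
    using mult_right_mono[of "v - u" "small_gap_bound l" "norm l"] assms by (simp add: mult.commute)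
  finally show "norm (integral {u..v} (cylinder_density T l s)) \<le> 1/2"
    using small_gap_bound_mult_le[of l] by simp
qed

lemma integral_cylinder_density_gap:
  assumes "\<tau> \<in> T" "s \<le> \<tau>"
  shows "integral {\<tau>..sigma T \<tau>} (cylinder_density T l s)
           = of_real (sigma T \<tau> - \<tau>) * cylinder l (sigma T \<tau> - \<tau>)"
proof -
  have "(cylinder_density T l s has_integral ((sigma T \<tau> - \<tau>) *\<^sub>R cylinder l (sigma T \<tau> - \<tau>)))
      {\<tau>..sigma T \<tau>}"
  proof (rule has_integral_spike_finite[of "{sigma T \<tau>}"])
    show "cylinder_density T l s r = cylinder l (sigma T \<tau> - \<tau>)" if "r \<in> {\<tau>..sigma T \<tau>} - {sigma T \<tau>}" for r
      using local_graininess_in_gap[of \<tau> r] assms that by (auto simp: cylinder_density_def)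
  qed (use has_integral_const_real[of "cylinder l (sigma T \<tau> - \<tau>)" \<tau> "sigma T \<tau>"] sigma_ge[of \<tau>]
      in \<open>auto simp: content_real\<close>)
  then show ?thesis by (simp add: integral_unique scaleR_conv_of_real)
qed

lemma finite_large_gaps: "finite (large_gaps T l \<inter> {s..<t})"
proof (rule finite_separated_subset[of _ s t, OF _ small_gap_bound_pos])
  fix x y assume "x \<in> large_gaps T l \<inter> {s..<t}" "y \<in> large_gaps T l \<inter> {s..<t}" "x < y"
  then show "small_gap_bound l \<le> y - x" using sigma_le[of y x] by (auto simp: large_gaps_def)
qed auto

lemma ts_exp_split_short:
  assumes "u \<in> T" "v \<in> T" "s \<le> u" "u \<le> v" "v - u < small_gap_bound l"
  shows "ts_exp T l s v = ts_exp T l s u * exp (integral {u..v} (cylinder_density T l s))"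
proof -
  have "large_gaps T l \<inter> {s..<v} = large_gaps T l \<inter> {s..<u}"
  proof (intro set_eqI iffI)
    fix x assume x: "x \<in> large_gaps T l \<inter> {s..<v}"
    show "x \<in> large_gaps T l \<inter> {s..<u}"
    proof (rule ccontr)
      assume "x \<notin> large_gaps T l \<inter> {s..<u}"
      then have "u \<le> x" using x by auto
      moreover have "sigma T x \<le> v" using sigma_le[of v x] x assms by auto
      ultimately show False using x assms by (auto simp: large_gaps_def)
    qed
  qed (use assms in auto)
  moreover have "integral {s..v} (cylinder_density T l s)
      = integral {s..u} (cylinder_density T l s) + integral {u..v} (cylinder_density T l s)"
    using Henstock_Kurzweil_Integration.integral_combine[OF assms(3,4) cylinder_density_integrable] by simp
  ultimately show ?thesis by (simp add: ts_exp_def large_gap_product_def exp_add mult_ac)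
qed

lemma ts_exp_jump:
  assumes "\<tau> \<in> T" "s \<le> \<tau>" "\<tau> < sigma T \<tau>"
  shows "ts_exp T l s (sigma T \<tau>) = (1 + of_real (sigma T \<tau> - \<tau>) * l) * ts_exp T l s \<tau>"
proof (cases "sigma T \<tau> - \<tau> < small_gap_bound l")
  case True
  have "norm (of_real (sigma T \<tau> - \<tau>) * l) \<le> 1/4"
    using True assms by (intro norm_mult_le_quarter) auto
  then have "1 + of_real (sigma T \<tau> - \<tau>) * l \<noteq> 0"
    by (auto simp: add_eq_0_iff)
  moreover have "integral {\<tau>..sigma T \<tau>} (cylinder_density T l s) = Ln (1 + of_real (sigma T \<tau> - \<tau>) * l)"
    using integral_cylinder_density_gap[OF assms(1,2)] assms True by (simp add: cylinder_def)
  ultimately show ?thesis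
    using ts_exp_split_short[OF assms(1) sigma_in_T assms(2)] assms True by (simp add: mult_ac)
next
  case False
  have "integral {\<tau>..sigma T \<tau>} (cylinder_density T l s) = 0"
    using integral_cylinder_density_gap[OF assms(1,2)] False by (simp add: cylinder_def)
  then have "integral {s..sigma T \<tau>} (cylinder_density T l s) = integral {s..\<tau>} (cylinder_density T l s)"
    using Henstock_Kurzweil_Integration.integral_combine[OF assms(2) _ cylinder_density_integrable, of "sigma T \<tau>"] assms by simp
  moreover have gaps: "large_gaps T l \<inter> {s..<sigma T \<tau>} = insert \<tau> (large_gaps T l \<inter> {s..<\<tau>})"
  proof (intro set_eqI iffI)
    fix x assume "x \<in> large_gaps T l \<inter> {s..<sigma T \<tau>}"
    then show "x \<in> insert \<tau> (large_gaps T l \<inter> {s..<\<tau>})"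
      using sigma_le[of x \<tau>] by (cases x \<tau> rule: linorder_cases) (auto simp: large_gaps_def)
  qed (use assms False in \<open>auto simp: large_gaps_def\<close>)
  then have "large_gap_product T l s (sigma T \<tau>) = (1 + of_real (sigma T \<tau> - \<tau>) * l) * large_gap_product T l s \<tau>"
    unfolding large_gap_product_def gaps by (subst prod.insert) (auto intro: finite_large_gaps)
  ultimately show ?thesis by (simp add: ts_exp_def mult_ac)
qed

lemma ts_exp_start: "ts_exp T l s s = 1"
  by (simp add: ts_exp_def large_gap_product_def)

lemma ts_exp_local_error:
  assumes "u \<in> T" "t \<in> T" "s \<le> u" "s \<le> t" "\<bar>t - u\<bar> < small_gap_bound l"
  shows "norm (ts_exp T l s t - ts_exp T l s u - (t - u) *\<^sub>R (l * ts_exp T l s t))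
           \<le> 10 * norm l ^ 2 * (t - u) ^ 2 * norm (ts_exp T l s t)"
proof (cases "u \<le> t")
  case True
  define I where "I = integral {u..t} (cylinder_density T l s)"
  have "ts_exp T l s u = ts_exp T l s t * exp (- I)"
    using ts_exp_split_short[OF assms(1,2,3) True] assms by (simp add: I_def exp_minus field_simps)
  then have "ts_exp T l s t - ts_exp T l s u - (t - u) *\<^sub>R (l * ts_exp T l s t)
      = - ts_exp T l s t * (exp (- I) - 1 + of_real (t - u) * l)"
    by (simp add: scaleR_conv_of_real algebra_simps)
  moreover have "norm (exp (- I) - 1 + of_real (t - u) * l) \<le> 10 * norm l ^ 2 * (t - u) ^ 2"
    using integral_cylinder_density_short[OF assms(1,2,3) True] assms True
    by (intro norm_exp_local_error) (auto simp: I_def)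
  ultimately show ?thesis by (simp add: norm_mult mult_left_mono mult.commute)
next
  case False
  define I where "I = integral {t..u} (cylinder_density T l s)"
  have "ts_exp T l s u = ts_exp T l s t * exp I"
    using ts_exp_split_short[OF assms(2,1,4)] assms False by (simp add: I_def)
  then have "ts_exp T l s t - ts_exp T l s u - (t - u) *\<^sub>R (l * ts_exp T l s t)
      = - ts_exp T l s t * (exp I - 1 - of_real (u - t) * l)"
    by (simp add: scaleR_conv_of_real algebra_simps)
  moreover have "norm (exp I - 1 - of_real (u - t) * l) \<le> 10 * norm l ^ 2 * (u - t) ^ 2"
    using integral_cylinder_density_short[OF assms(2,1,4)] assms False
    by (intro norm_exp_local_error) (auto simp: I_def)
  ultimately show ?thesis by (simp add: norm_mult mult_left_mono mult.commute power2_commute)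
qed

lemma has_delta_derivative_ts_exp:
  assumes t: "t \<in> T" "s \<le> t"
  shows "has_delta_derivative (T \<inter> {s..}) (ts_exp T l s) (l * ts_exp T l s t) t"
  unfolding has_delta_derivative_def sigma_restrict[OF t(2)]
proof (intro allI impI)
  fix \<epsilon> :: real assume "\<epsilon> > 0"
  define K where "K = 10 * norm l ^ 2 * norm (ts_exp T l s t) + 1"
  have "K > 0" by (simp add: K_def add_nonneg_pos)
  define d where "d = min (small_gap_bound l) (\<epsilon> / K)"
  have "d > 0" using small_gap_bound_pos[of l] \<open>\<epsilon> > 0\<close> \<open>K > 0\<close> by (simp add: d_def)
  have approx: "norm (ts_exp T l s t - ts_exp T l s u - (t - u) *\<^sub>R (l * ts_exp T l s t)) \<le> \<epsilon> * \<bar>t - u\<bar>"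
    if u: "u \<in> T" "s \<le> u" "\<bar>u - t\<bar> < d" for u
  proof -
    have "norm (ts_exp T l s t - ts_exp T l s u - (t - u) *\<^sub>R (l * ts_exp T l s t))
        \<le> 10 * norm l ^ 2 * (t - u) ^ 2 * norm (ts_exp T l s t)"
      using ts_exp_local_error[OF u(1) t(1) u(2) t(2)] u by (auto simp: d_def abs_minus_commute)
    also have "\<dots> = (10 * norm l ^ 2 * norm (ts_exp T l s t)) * (\<bar>t - u\<bar> * \<bar>t - u\<bar>)"
      by (simp add: power2_eq_square abs_mult_self_eq mult_ac)
    also have "\<dots> \<le> K * (\<bar>t - u\<bar> * \<bar>t - u\<bar>)" by (rule mult_right_mono) (auto simp: K_def)
    also have "\<dots> = K * \<bar>t - u\<bar> * \<bar>t - u\<bar>" by (simp add: mult_ac)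
    also have "\<dots> \<le> K * (\<epsilon> / K) * \<bar>t - u\<bar>"
      using u \<open>K > 0\<close> by (intro mult_right_mono mult_left_mono) (auto simp: d_def abs_minus_commute)
    finally show ?thesis using \<open>K > 0\<close> by simp
  qed
  show "\<exists>d>0. \<forall>u\<in>T \<inter> {s..}. \<bar>u - t\<bar> < d \<longrightarrow>
        norm (ts_exp T l s (sigma T t) - ts_exp T l s u - (sigma T t - u) *\<^sub>R (l * ts_exp T l s t))
          \<le> \<epsilon> * \<bar>sigma T t - u\<bar>"
  proof (cases "sigma T t = t")
    case True
    then show ?thesis using approx \<open>d > 0\<close> by (intro exI[of _ d]) auto
  next
    case False
    then have "t < sigma T t" using sigma_ge[of t] by simp
    have "norm (ts_exp T l s (sigma T t) - ts_exp T l s u - (sigma T t - u) *\<^sub>R (l * ts_exp T l s t))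
          \<le> \<epsilon> * \<bar>sigma T t - u\<bar>"
      if u: "u \<in> T \<inter> {s..}" "\<bar>u - t\<bar> < min d (sigma T t - t)" for u
    proof -
      have "u \<le> t" using u sigma_le[of u t] by force
      have "ts_exp T l s (sigma T t) - ts_exp T l s u - (sigma T t - u) *\<^sub>R (l * ts_exp T l s t)
          = ts_exp T l s t - ts_exp T l s u - (t - u) *\<^sub>R (l * ts_exp T l s t)"
        using ts_exp_jump[OF t \<open>t < sigma T t\<close>] by (simp add: scaleR_conv_of_real algebra_simps)
      also have "norm \<dots> \<le> \<epsilon> * \<bar>t - u\<bar>" using approx[of u] u by auto
      also have "\<dots> \<le> \<epsilon> * \<bar>sigma T t - u\<bar>"
        using \<open>\<epsilon> > 0\<close> \<open>u \<le> t\<close> \<open>t < sigma T t\<close> by (intro mult_left_mono) auto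
      finally show ?thesis .
    qed
    then show ?thesis using \<open>d > 0\<close> \<open>t < sigma T t\<close> by (intro exI[of _ "min d (sigma T t - t)"]) auto
  qed
qed

lemma is_solution_ts_exp: "is_solution T (\<lambda>z. l * z) s (\<lambda>t. a * ts_exp T l s t)"
  unfolding is_solution_def
proof (intro ballI impI)
  fix t assume "t \<in> T" "s \<le> t"
  from has_delta_derivative_cmult[OF has_delta_derivative_ts_exp[OF this], of a]
  show "has_delta_derivative (T \<inter> {s..}) (\<lambda>t. a * ts_exp T l s t) (l * (a * ts_exp T l s t)) t"
    by (simp add: mult.left_commute)
qed

end

end

section \<open>Scalar equations with decaying forcing\<close>

lemma is_solution_cmult:
  fixes l c :: complex
  assumes "is_solution T (\<lambda>z. l * z) t0 y"
  shows "is_solution T (\<lambda>z. l * z) t0 (\<lambda>t. c * y t)"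
  using assms has_delta_derivative_cmult[of "T \<inter> {t0..}" y _ _ c]
  unfolding is_solution_def by (simp add: mult.left_commute)

definition exp_bounded_solutions :: "real set \<Rightarrow> complex \<Rightarrow> real \<Rightarrow> real \<Rightarrow> bool" where
  "exp_bounded_solutions T l K \<alpha> \<longleftrightarrow>
     (\<forall>t0\<in>T. \<forall>t\<in>T. \<forall>y. t0 \<le> t \<longrightarrow> is_solution T (\<lambda>z. l * z) t0 y \<longrightarrow>
        norm (y t) \<le> K * exp (- \<alpha> * (t - t0)) * norm (y t0))"

text \<open>For a linear equation the neighbourhood in the definition of stability is irrelevant:
  every solution can be scaled into it.\<close>

lemma stability_set_global_bound:
  assumes "l \<in> stability_set T"
  obtains K \<alpha> where "K \<ge> 1" "\<alpha> > 0" "exp_bounded_solutions T l K \<alpha>"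
proof -
  from assms obtain K \<alpha> V where K: "K \<ge> 1" "\<alpha> > 0" "open V" "0 \<in> V"
    and stable: "\<forall>t0\<in>T. \<forall>t\<in>T. \<forall>x0\<in>V. \<forall>x. t0 \<le> t \<longrightarrow> is_solution T (\<lambda>z. l * z) t0 x \<longrightarrow>
           x t0 = x0 \<longrightarrow> norm (x t) \<le> K * exp (- \<alpha> * (t - t0)) * norm x0"
    unfolding stability_set_def uniformly_exp_stable_def by blast
  from K obtain r where "r > 0" "ball 0 r \<subseteq> V" using open_contains_ball by blast
  have "norm (y t) \<le> K * exp (- \<alpha> * (t - t0)) * norm (y t0)"
    if "t0 \<in> T" "t \<in> T" "t0 \<le> t" and sol: "is_solution T (\<lambda>z. l * z) t0 y" for t0 t y
  proof (cases "y t0 = 0")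
    case True
    then show ?thesis using stable[rule_format, OF that(1,2) K(4) that(3) sol True] by simp
  next
    case False
    define \<rho> where "\<rho> = r / (2 * norm (y t0))"
    define c where "c = complex_of_real \<rho>"
    have "\<rho> > 0" using False \<open>r > 0\<close> by (simp add: \<rho>_def)
    then have "norm c > 0" by (simp add: c_def)
    have "norm (c * y t0) = \<rho> * norm (y t0)" using \<open>\<rho> > 0\<close> by (simp add: c_def norm_mult)
    also have "\<dots> = r / 2" using False by (simp add: \<rho>_def)
    finally have "c * y t0 \<in> V" using \<open>r > 0\<close> \<open>ball 0 r \<subseteq> V\<close> by auto
    from stable[rule_format, OF that(1,2) this that(3) is_solution_cmult[OF sol, of c]]
    have "norm (c * y t) \<le> K * exp (- \<alpha> * (t - t0)) * norm (c * y t0)" by simp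
    then show ?thesis using \<open>norm c > 0\<close> by (simp add: norm_mult mult.left_commute)
  qed
  with K show thesis by (intro that) (auto simp: exp_bounded_solutions_def)
qed

lemma (in unbounded_time_scale) is_inhomogeneous_solution_restrict:
  assumes "is_inhomogeneous_solution T l f t0 y" "t0 \<le> t1"
  shows "is_inhomogeneous_solution T l f t1 y"
  unfolding is_inhomogeneous_solution_def
proof (intro ballI impI)
  fix t assume t: "t \<in> T" "t1 \<le> t"
  then have "t0 \<le> t" using assms(2) by linarith
  with assms(1) t(1) have "has_delta_derivative (T \<inter> {t0..}) y (l * y t + f t) t"
    unfolding is_inhomogeneous_solution_def by blast
  moreover have "T \<inter> {t1..} \<subseteq> T \<inter> {t0..}" using assms(2) by auto
  moreover have "sigma (T \<inter> {t1..}) t = sigma (T \<inter> {t0..}) t"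
    by (simp only: sigma_restrict[OF t(2)] sigma_restrict[OF \<open>t0 \<le> t\<close>])
  ultimately show "has_delta_derivative (T \<inter> {t1..}) y (l * y t + f t) t"
    by (rule has_delta_derivative_subset)
qed

text \<open>Variation of constants: the solution is the homogeneous solution through \<open>y t1\<close>
  plus a solution vanishing at \<open>t1\<close>, which Gronwall's inequality controls.\<close>

lemma (in unbounded_time_scale) inhomogeneous_solution_bound:
  fixes l :: complex
  assumes homogeneous_bound: "exp_bounded_solutions T l K \<alpha>"
    and t1: "t1 \<in> T" and sol: "is_inhomogeneous_solution T l f t1 y" and "F \<ge> 0"
    and f_bound: "\<forall>\<tau>\<in>T. t1 \<le> \<tau> \<and> \<tau> \<le> t \<longrightarrow> norm (f \<tau>) \<le> F"
    and t: "t \<in> T" "t1 \<le> t"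
  shows "norm (y t) \<le> K * exp (- \<alpha> * (t - t1)) * norm (y t1) + F * exp ((norm l + 1) * (t - t1))"
proof -
  define h where "h = (\<lambda>t. y t1 * ts_exp T l t1 t)"
  have h: "is_solution T (\<lambda>z. l * z) t1 h" "h t1 = y t1"
    using is_solution_ts_exp[OF t1, of l "y t1"] ts_exp_start[OF t1, of l] by (simp_all add: h_def)
  have "is_inhomogeneous_solution T l f t1 (\<lambda>t. y t - h t)"
    unfolding is_inhomogeneous_solution_def
  proof (intro ballI impI)
    fix \<tau> assume "\<tau> \<in> T" "t1 \<le> \<tau>"
    with sol h(1) have "has_delta_derivative (T \<inter> {t1..}) y (l * y \<tau> + f \<tau>) \<tau>"
      "has_delta_derivative (T \<inter> {t1..}) h (l * h \<tau>) \<tau>"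
      by (auto simp: is_inhomogeneous_solution_def is_solution_def)
    from has_delta_derivative_diff[OF this]
    show "has_delta_derivative (T \<inter> {t1..}) (\<lambda>t. y t - h t) (l * (y \<tau> - h \<tau>) + f \<tau>) \<tau>"
      by (simp add: algebra_simps)
  qed
  from gronwall[OF t1 this _ \<open>F \<ge> 0\<close> f_bound t] h(2)
  have "norm (y t - h t) \<le> F * exp ((norm l + 1) * (t - t1))" by simp
  moreover have "norm (h t) \<le> K * exp (- \<alpha> * (t - t1)) * norm (y t1)"
  proof -
    have "norm (h t) \<le> K * exp (- \<alpha> * (t - t1)) * norm (h t1)"
      using homogeneous_bound t1 t h(1) unfolding exp_bounded_solutions_def by blast
    with h(2) show ?thesis by simp
  qed
  ultimately show ?thesis using norm_triangle_ineq[of "h t" "y t - h t"] by simp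
qed

locale bounded_graininess_time_scale = unbounded_time_scale +
  fixes B :: real
  assumes B_nonneg: "B \<ge> 0" and graininess_le: "\<And>t. t \<in> T \<Longrightarrow> sigma T t - t \<le> B"
begin

lemma point_shortly_before:
  assumes t0: "t0 \<in> T" and "t0 \<le> x"
  obtains t1 where "t1 \<in> T" "t0 \<le> t1" "t1 \<le> x" "x - B \<le> t1"
proof -
  define t1 where "t1 = Sup (T \<inter> {t0..x})"
  have ne: "T \<inter> {t0..x} \<noteq> {}" using assms by auto
  have bd: "bdd_above (T \<inter> {t0..x})" by (auto intro: bdd_aboveI[of _ x])
  have t1: "t1 \<in> T \<inter> {t0..x}" unfolding t1_def
    by (rule closed_contains_Sup[OF ne bd]) (simp add: closed_Int closed_T)
  have upper: "u \<le> t1" if "u \<in> T" "t0 \<le> u" "u \<le> x" for u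
    unfolding t1_def using that by (intro cSup_upper[OF _ bd]) auto
  have "x < sigma T t1" if "t1 < x"
  proof (rule ccontr)
    assume "\<not> x < sigma T t1"
    moreover have "t0 \<le> sigma T t1" using sigma_ge[of t1] t1 by simp
    ultimately have "sigma T t1 \<le> t1" using upper[OF sigma_in_T] by simp
    then have "sigma T t1 = t1" using sigma_ge[of t1] by simp
    from right_dense_approx[OF this, of "x - t1"] \<open>t1 < x\<close> obtain u where "u \<in> T" "t1 < u" "u < x"
      by auto
    then show False using upper[of u] t1 by auto
  qed
  then have "x - B \<le> t1"
    using graininess_le[of t1] t1 B_nonneg by (cases "t1 < x") auto
  with t1 show thesis by (intro that) auto
qed

lemma bounded_by_contraction:
  fixes w :: "real \<Rightarrow> real"
  assumes t0: "t0 \<in> T" and "L > 0"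
    and initial: "\<And>t. t \<in> T \<Longrightarrow> t0 \<le> t \<Longrightarrow> t \<le> t0 + L + B \<Longrightarrow> w t \<le> W"
    and contract: "\<And>t1 t. t1 \<in> T \<Longrightarrow> t0 \<le> t1 \<Longrightarrow> t \<in> T \<Longrightarrow> t1 + L \<le> t \<Longrightarrow> t \<le> t1 + L + B \<Longrightarrow>
        w t \<le> 3/4 * w t1 + R"
    and "4 * R \<le> W"
    and t: "t \<in> T" "t0 \<le> t"
  shows "w t \<le> W"
proof -
  have "\<forall>t\<in>T. t0 \<le> t \<and> t < t0 + real n * L \<longrightarrow> w t \<le> W" for n
  proof (induction n)
    case (Suc n)
    show ?case
    proof (intro ballI impI)
      fix t assume t: "t \<in> T" "t0 \<le> t \<and> t < t0 + real (Suc n) * L"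
      show "w t \<le> W"
      proof (cases "t < t0 + L")
        case True
        then show ?thesis using t B_nonneg by (intro initial) auto
      next
        case False
        then obtain t1 where t1: "t1 \<in> T" "t0 \<le> t1" "t1 \<le> t - L" "t - L - B \<le> t1"
          using point_shortly_before[OF t0, of "t - L"] by auto
        moreover have "t1 < t0 + real n * L" using t t1 by (simp add: algebra_simps)
        ultimately have "w t1 \<le> W" using Suc.IH by blast
        moreover have "w t \<le> 3/4 * w t1 + R" using t1 by (intro contract[OF t1(1,2) t(1)]) auto
        ultimately show ?thesis using \<open>4 * R \<le> W\<close> by linarith
      qed
    qed
  qed (use \<open>L > 0\<close> in auto)
  moreover obtain n :: nat where "(t - t0) / L < real n" using reals_Archimedean2 by blast
  then have "t < t0 + real n * L" using \<open>L > 0\<close> by (simp add: field_simps)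
  ultimately show ?thesis using t by blast
qed

lemma inhomogeneous_window_bound:
  fixes l :: complex
  assumes homogeneous_bound: "exp_bounded_solutions T l K \<alpha>"
    and sol: "is_inhomogeneous_solution T l f t0 y" and "M \<ge> 0" "\<beta> \<ge> 0"
    and f_bound: "\<forall>t\<in>T. t0 \<le> t \<longrightarrow> norm (f t) \<le> M * exp (- \<beta> * (t - t0))"
    and t1: "t1 \<in> T" "t0 \<le> t1" and t: "t \<in> T" "t1 \<le> t" "t \<le> t1 + D"
  shows "norm (y t) \<le> K * exp (- \<alpha> * (t - t1)) * norm (y t1)
           + M * exp (- \<beta> * (t1 - t0)) * exp ((norm l + 1) * D)"
proof -
  define F where "F = M * exp (- \<beta> * (t1 - t0))"
  have "F \<ge> 0" using \<open>M \<ge> 0\<close> by (simp add: F_def)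
  have "\<forall>\<tau>\<in>T. t1 \<le> \<tau> \<and> \<tau> \<le> t \<longrightarrow> norm (f \<tau>) \<le> F"
  proof (intro ballI impI)
    fix \<tau> assume "\<tau> \<in> T" "t1 \<le> \<tau> \<and> \<tau> \<le> t"
    then have "norm (f \<tau>) \<le> M * exp (- \<beta> * (\<tau> - t0))" using f_bound t1 by auto
    also have "\<dots> \<le> F"
      using \<open>M \<ge> 0\<close> \<open>\<beta> \<ge> 0\<close> \<open>t1 \<le> \<tau> \<and> \<tau> \<le> t\<close> by (auto simp: F_def intro!: mult_left_mono mult_left_mono)
    finally show "norm (f \<tau>) \<le> F" .
  qed
  from inhomogeneous_solution_bound[OF homogeneous_bound t1(1)
      is_inhomogeneous_solution_restrict[OF sol t1(2)] \<open>F \<ge> 0\<close> this t(1,2)]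
  have "norm (y t) \<le> K * exp (- \<alpha> * (t - t1)) * norm (y t1) + F * exp ((norm l + 1) * (t - t1))" .
  moreover have "F * exp ((norm l + 1) * (t - t1)) \<le> F * exp ((norm l + 1) * D)"
    using \<open>F \<ge> 0\<close> t by (intro mult_left_mono) (auto intro: mult_left_mono)
  ultimately show ?thesis by (simp add: F_def)
qed

lemma inhomogeneous_weighted_bound:
  fixes l :: complex
  assumes homogeneous_bound: "exp_bounded_solutions T l K \<alpha>" and K: "K \<ge> 1" "\<alpha> > 0"
    and "L > 0" and half_life: "K * exp (- \<alpha> * L) \<le> 1/2"
    and \<gamma>: "0 \<le> \<gamma>" "\<gamma> \<le> \<beta>" "exp (\<gamma> * (L + B)) \<le> 3/2"
    and t0: "t0 \<in> T" and "M \<ge> 0" and sol: "is_inhomogeneous_solution T l f t0 y"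
    and f_bound: "\<forall>t\<in>T. t0 \<le> t \<longrightarrow> norm (f t) \<le> M * exp (- \<beta> * (t - t0))"
    and t: "t \<in> T" "t0 \<le> t"
  defines "E \<equiv> exp ((norm l + 1) * (L + B))"
  shows "norm (y t) * exp (\<gamma> * (t - t0)) \<le> 3/2 * (K * norm (y t0) + M * E) + 6 * (M * E)"
proof -
  define w where "w t = norm (y t) * exp (\<gamma> * (t - t0))" for t
  have exp_\<gamma>: "exp (\<gamma> * h) \<le> 3/2" if "h \<le> L + B" for h
    using \<gamma> that by (meson exp_le_cancel_iff mult_left_mono order_trans)
  have "0 \<le> M * E" using \<open>M \<ge> 0\<close> by (simp add: E_def)
  note window = inhomogeneous_window_bound[OF homogeneous_bound sol \<open>M \<ge> 0\<close> _ f_bound,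
      where D = "L + B", folded E_def]
  show ?thesis
  proof (rule bounded_by_contraction[where w = w, OF t0 \<open>L > 0\<close>, unfolded w_def])
    fix t assume t: "t \<in> T" "t0 \<le> t" "t \<le> t0 + L + B"
    have "norm (y t) \<le> K * exp (- \<alpha> * (t - t0)) * norm (y t0) + M * E"
      using window[OF _ t0 order_refl t(1,2)] \<gamma> t by simp
    also have "K * exp (- \<alpha> * (t - t0)) * norm (y t0) \<le> K * norm (y t0)"
      using t K by (simp add: mult_left_le_one_le)
    finally have "norm (y t) * exp (\<gamma> * (t - t0)) \<le> (K * norm (y t0) + M * E) * (3/2)"
      using exp_\<gamma>[of "t - t0"] t K \<open>0 \<le> M * E\<close> by (intro mult_mono) auto
    with \<open>0 \<le> M * E\<close>
    show "norm (y t) * exp (\<gamma> * (t - t0)) \<le> 3/2 * (K * norm (y t0) + M * E) + 6 * (M * E)"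
      by linarith
  next
    fix t1 t assume t1: "t1 \<in> T" "t0 \<le> t1" and t: "t \<in> T" "t1 + L \<le> t" "t \<le> t1 + L + B"
    have "K * exp (- \<alpha> * (t - t1)) \<le> K * exp (- \<alpha> * L)"
      using t K \<open>L > 0\<close> by (intro mult_left_mono) auto
    with half_life have "K * exp (- \<alpha> * (t - t1)) * norm (y t1) \<le> 1/2 * norm (y t1)"
      by (intro mult_right_mono) auto
    moreover have "norm (y t) \<le> K * exp (- \<alpha> * (t - t1)) * norm (y t1) + M * exp (- \<beta> * (t1 - t0)) * E"
      using window[OF _ t1 t(1)] \<gamma> t \<open>L > 0\<close> by simp
    ultimately have "norm (y t) \<le> 1/2 * norm (y t1) + M * exp (- \<beta> * (t1 - t0)) * E"
      by linarith
    then have "w t \<le> (1/2 * norm (y t1) + M * exp (- \<beta> * (t1 - t0)) * E) * exp (\<gamma> * (t - t0))"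
      unfolding w_def by (intro mult_right_mono) auto
    also have "\<dots> = 1/2 * exp (\<gamma> * (t - t1)) * w t1 + M * E * exp ((\<gamma> - \<beta>) * (t1 - t0) + \<gamma> * (t - t1))"
      by (simp add: w_def algebra_simps flip: exp_add)
    also have "\<dots> \<le> 1/2 * (3/2) * w t1 + M * E * (3/2)"
    proof (intro add_mono mult_left_mono mult_right_mono)
      show "exp (\<gamma> * (t - t1)) \<le> 3/2" using exp_\<gamma> t by simp
      have "(\<gamma> - \<beta>) * (t1 - t0) \<le> 0" using t1 \<gamma> by (simp add: mult_nonpos_nonneg)
      then have "exp ((\<gamma> - \<beta>) * (t1 - t0) + \<gamma> * (t - t1)) \<le> exp (\<gamma> * (t - t1))" by simp
      with \<open>exp (\<gamma> * (t - t1)) \<le> 3/2\<close>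
      show "exp ((\<gamma> - \<beta>) * (t1 - t0) + \<gamma> * (t - t1)) \<le> 3/2" by linarith
    qed (use \<open>0 \<le> M * E\<close> in \<open>auto simp: w_def\<close>)
    finally show "norm (y t) * exp (\<gamma> * (t - t0))
        \<le> 3/4 * (norm (y t1) * exp (\<gamma> * (t1 - t0))) + 3/2 * (M * E)"
      by (simp add: w_def)
  qed (use t \<open>0 \<le> M * E\<close> K in auto)
qed

lemma inhomogeneous_exp_decay:
  fixes l :: complex
  assumes "l \<in> stability_set T" "\<beta> > 0"
  obtains C \<gamma> where "C \<ge> 0" "\<gamma> > 0"
    "\<And>t0 y f M t. t0 \<in> T \<Longrightarrow> M \<ge> 0 \<Longrightarrow> is_inhomogeneous_solution T l f t0 y \<Longrightarrow>
       (\<forall>t\<in>T. t0 \<le> t \<longrightarrow> norm (f t) \<le> M * exp (- \<beta> * (t - t0))) \<Longrightarrow> t \<in> T \<Longrightarrow> t0 \<le> t \<Longrightarrow>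
       norm (y t) \<le> C * (norm (y t0) + M) * exp (- \<gamma> * (t - t0))"
proof -
  obtain K \<alpha> where K: "K \<ge> 1" "\<alpha> > 0" and homogeneous_bound: "exp_bounded_solutions T l K \<alpha>"
    using stability_set_global_bound[OF assms(1)] by blast
  define L where "L = ln (2 * K) / \<alpha>"
  have "L > 0" using K by (simp add: L_def)
  have half_life: "K * exp (- \<alpha> * L) \<le> 1/2"
    using K by (simp add: L_def exp_minus inverse_eq_divide)
  define D where "D = L + B"
  have "D > 0" using \<open>L > 0\<close> B_nonneg by (simp add: D_def)
  define \<gamma> where "\<gamma> = min \<beta> (ln (3/2) / D)"
  have "\<gamma> > 0" "\<gamma> \<le> \<beta>" using assms(2) \<open>D > 0\<close> by (simp_all add: \<gamma>_def)
  have "\<gamma> * D \<le> ln (3/2)" using \<open>D > 0\<close> by (simp add: \<gamma>_def min_def field_simps)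
  then have "exp (\<gamma> * (L + B)) \<le> 3/2"
    by (metis D_def exp_le_cancel_iff exp_ln zero_less_divide_iff zero_less_numeral)
  note weighted = inhomogeneous_weighted_bound[OF homogeneous_bound K \<open>L > 0\<close> half_life
      less_imp_le[OF \<open>\<gamma> > 0\<close>] \<open>\<gamma> \<le> \<beta>\<close> this]
  define E where "E = exp ((norm l + 1) * (L + B))"
  define C where "C = 3/2 * K + 15/2 * E"
  have "norm (y t) \<le> C * (norm (y t0) + M) * exp (- \<gamma> * (t - t0))"
    if "t0 \<in> T" "M \<ge> 0" "is_inhomogeneous_solution T l f t0 y"
      "\<forall>t\<in>T. t0 \<le> t \<longrightarrow> norm (f t) \<le> M * exp (- \<beta> * (t - t0))" "t \<in> T" "t0 \<le> t"
    for t0 y f M t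
  proof -
    have "norm (y t) = (norm (y t) * exp (\<gamma> * (t - t0))) * exp (- \<gamma> * (t - t0))"
      by (simp flip: exp_add)
    also have "\<dots> \<le> (3/2 * (K * norm (y t0) + M * E) + 6 * (M * E)) * exp (- \<gamma> * (t - t0))"
      using weighted[OF that] by (intro mult_right_mono) (auto simp: E_def)
    also have "3/2 * (K * norm (y t0) + M * E) + 6 * (M * E) \<le> C * (norm (y t0) + M)"
    proof -
      have "C * (norm (y t0) + M) - (3/2 * (K * norm (y t0) + M * E) + 6 * (M * E))
          = 3/2 * (K * M) + 15/2 * (E * norm (y t0))"
        by (simp add: C_def field_simps)
      moreover have "0 \<le> K * M" "0 \<le> E * norm (y t0)" using K \<open>M \<ge> 0\<close> by (simp_all add: E_def)
      ultimately show ?thesis by linarith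
    qed
    finally show ?thesis by (simp add: mult_right_mono)
  qed
  moreover have "C \<ge> 0" using K by (simp add: C_def E_def)
  ultimately show thesis using \<open>\<gamma> > 0\<close> that by blast
qed

end

section \<open>Polynomials of matrices\<close>

lemma if_zero_mult: "(if P then a else 0) * x = (if P then a * x else (0::'a::semiring_0))"
  and mult_if_zero: "x * (if P then a else 0) = (if P then x * a else (0::'a::semiring_0))"
  by simp_all

lemma mat_matrix_mult: "mat a ** B = (\<chi> i j. a * B $ i $ j)" for B :: "'a::comm_ring_1^'n^'m"
  by (simp add: matrix_matrix_mult_def mat_def vec_eq_iff if_zero_mult sum.delta)

lemma matrix_mult_mat: "B ** mat a = (\<chi> i j. B $ i $ j * a)" for B :: "'a::comm_ring_1^'n^'m"
  by (simp add: matrix_matrix_mult_def mat_def vec_eq_iff mult_if_zero sum.delta')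

lemma mat_matrix_mult_commute: "mat a ** B = B ** mat a" for B :: "'a::comm_ring_1^'n^'n"
  by (simp add: mat_matrix_mult matrix_mult_mat mult.commute)

lemma mat_add: "mat (a + b) = (mat a + mat b :: 'a::comm_ring_1^'n^'n)"
  by (simp add: mat_def vec_eq_iff)

lemma mat_mult: "mat (a * b) = (mat a ** mat b :: 'a::comm_ring_1^'n^'n)"
  by (simp add: mat_matrix_mult) (simp add: mat_def vec_eq_iff)

lemma mat_matrix_vector_mult: "mat a *v v = (\<chi> i. a * v $ i)" for v :: "'a::comm_ring_1^'n"
  by (simp add: matrix_vector_mult_def mat_def vec_eq_iff if_zero_mult sum.delta)

lemma matrix_mult_zero_right: "A ** (0::'a::semiring_1^'n^'m) = 0"
  and matrix_mult_zero_left: "(0::'a::semiring_1^'n^'m) ** A = 0"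
  by (simp_all add: matrix_matrix_mult_def vec_eq_iff)

lemma matrix_add_rdistrib: "(A + B) ** C = A ** C + B ** (C :: 'a::semiring_1^'n^'m)"
  by (simp add: matrix_matrix_mult_def vec_eq_iff sum.distrib algebra_simps)

definition poly_mat :: "'a::comm_ring_1 poly \<Rightarrow> 'a^'n^'n \<Rightarrow> 'a^'n^'n" where
  "poly_mat p M = fold_coeffs (\<lambda>a N. mat a + M ** N) p 0"

lemma poly_mat_0 [simp]: "poly_mat 0 M = 0"
  by (simp add: poly_mat_def)

lemma poly_mat_pCons [simp]: "poly_mat (pCons a p) M = mat a + M ** poly_mat p M"
  by (cases "p = 0 \<and> a = 0") (auto simp: poly_mat_def matrix_mult_zero_right)

lemma poly_mat_add: "poly_mat (p + q) M = poly_mat p M + poly_mat q M"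
proof (induction p arbitrary: q)
  case (pCons a p)
  obtain b q' where "q = pCons b q'" by (cases q) auto
  then show ?case using pCons.IH[of q'] by (simp add: mat_add matrix_add_ldistrib algebra_simps)
qed simp

lemma poly_mat_smult: "poly_mat (smult c p) M = mat c ** poly_mat p M"
proof (induction p)
  case (pCons a p)
  have "mat c ** M = M ** mat c" by (rule mat_matrix_mult_commute)
  then have "mat c ** (mat a + M ** poly_mat p M) = mat (c * a) + M ** (mat c ** poly_mat p M)"
    by (simp add: matrix_add_ldistrib mat_mult matrix_mul_assoc)
  then show ?case using pCons.IH by simp
qed (simp add: matrix_mult_zero_right)

lemma poly_mat_mult: "poly_mat (p * q) M = poly_mat p M ** poly_mat q M"
proof (induction p)
  case (pCons a p)
  have "poly_mat (pCons a p * q) M = poly_mat (smult a q + pCons 0 (p * q)) M" by simp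
  also have "\<dots> = (mat a + M ** poly_mat p M) ** poly_mat q M"
    by (simp add: poly_mat_add poly_mat_smult pCons.IH matrix_add_rdistrib matrix_mul_assoc)
  finally show ?case by simp
qed (simp add: matrix_mult_zero_left)

lemma poly_mat_1 [simp]: "poly_mat 1 M = mat 1"
  by (simp add: one_pCons matrix_mult_zero_right)

lemma poly_mat_monic_linear: "poly_mat [:-r, 1:] M = M - mat r"
proof -
  have "mat (- r) = - (mat r :: 'a^'n^'n)" by (simp add: mat_def vec_eq_iff)
  then show ?thesis by (simp add: matrix_mult_zero_right)
qed

lemma poly_mat_sum: "poly_mat (\<Sum>i\<in>A. f i) M = (\<Sum>i\<in>A. poly_mat (f i) M)"
  by (induction A rule: infinite_finite_induct) (simp_all add: poly_mat_add)

lemma poly_mat_commute: "poly_mat p M ** M = M ** poly_mat p M"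
proof -
  have X: "poly_mat [:0, 1:] M = M" by (simp add: matrix_mult_zero_right)
  have "poly_mat p M ** M = poly_mat (p * [:0, 1:]) M" by (simp only: poly_mat_mult X)
  also have "\<dots> = poly_mat ([:0, 1:] * p) M" by (simp only: mult.commute)
  also have "\<dots> = M ** poly_mat p M" by (simp only: poly_mat_mult X)
  finally show ?thesis .
qed

lemma poly_mat_monom: "poly_mat (monom c k) M = mat c ** poly_mat (monom 1 k) M"
  using poly_mat_smult[of c "monom 1 k" M] by (simp add: smult_monom)

lemma mat_of_real_matrix_mult: "mat (complex_of_real c) ** A = c *\<^sub>R A" for A :: "complex^'n^'n"
  by (simp add: mat_matrix_mult vec_eq_iff) (simp add: scaleR_conv_of_real)

text \<open>The powers \<open>M\<^sup>0, \<dots>, M\<^sup>N\<close> with \<open>N\<close> the real dimension of the matrix space are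
  real-linearly dependent.\<close>

lemma annihilating_poly:
  fixes M :: "complex^'n^'n"
  obtains q where "q \<noteq> 0" "poly_mat q M = 0"
proof -
  define N where "N = DIM(complex^'n^'n)"
  define P where "P k = poly_mat (monom 1 k) M" for k
  show thesis
  proof (cases "inj_on P {..N}")
    case False
    then obtain i j where ij: "i \<noteq> j" "P i = P j" unfolding inj_on_def by auto
    define q where "q = monom 1 j + smult (-1) (monom (1::complex) i)"
    have "coeff q j = 1" using ij by (simp add: q_def coeff_monom)
    then have "q \<noteq> 0" by auto
    moreover have "poly_mat q M = P j + mat (-1) ** P i"
      unfolding q_def P_def poly_mat_add poly_mat_smult ..
    then have "poly_mat q M = 0" using ij by (simp add: mat_matrix_mult vec_eq_iff)
    ultimately show thesis by (rule that)
  next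
    case True
    then have "card (P ` {..N}) = N + 1" by (simp add: card_image)
    then have "dependent (P ` {..N})" by (intro dependent_biggerset) (simp add: N_def)
    then obtain u where u: "\<exists>v\<in>P ` {..N}. u v \<noteq> 0" "(\<Sum>v\<in>P ` {..N}. u v *\<^sub>R v) = 0"
      using real_vector.dependent_finite[of "P ` {..N}"] by blast
    define q where "q = (\<Sum>i\<le>N. monom (complex_of_real (u (P i))) i)"
    have "poly_mat (monom (complex_of_real c) k) M = c *\<^sub>R P k" for c k
      using poly_mat_monom[of "complex_of_real c" k M] by (simp add: P_def mat_of_real_matrix_mult)
    then have "poly_mat q M = (\<Sum>i\<le>N. u (P i) *\<^sub>R P i)"
      by (simp add: q_def poly_mat_sum)
    also have "\<dots> = 0" using u(2) True by (simp add: sum.reindex)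
    finally have "poly_mat q M = 0" .
    moreover from u(1) obtain k where "k \<le> N" "u (P k) \<noteq> 0" by auto
    then have "coeff q k \<noteq> 0" by (simp add: q_def coeff_sum coeff_monom)
    then have "q \<noteq> 0" by auto
    ultimately show thesis using that by blast
  qed
qed

lemma annihilating_linear_factors:
  fixes M :: "complex^'n^'n"
  shows "\<exists>(d::nat) root. poly_mat (\<Prod>i<d. [:- root i, 1:]) M = 0"
proof -
  obtain q where q: "q \<noteq> 0" "poly_mat q M = 0" by (rule annihilating_poly)
  obtain root where root: "smult (lead_coeff q) (\<Prod>i<degree q. [:- root i, 1:]) = q"
    using complex_poly_decompose' by blast
  have "mat (lead_coeff q) ** poly_mat (\<Prod>i<degree q. [:- root i, 1:]) M = 0"
    using poly_mat_smult[of "lead_coeff q" "\<Prod>i<degree q. [:- root i, 1:]" M] root q(2) by simp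
  then have "mat (1 / lead_coeff q) ** (mat (lead_coeff q) ** poly_mat (\<Prod>i<degree q. [:- root i, 1:]) M) = 0"
    by (simp add: matrix_mult_zero_right)
  then have "poly_mat (\<Prod>i<degree q. [:- root i, 1:]) M = 0"
    using q(1) by (simp add: matrix_mul_assoc flip: mat_mult)
  then show ?thesis by blast
qed

section \<open>Necessity\<close>

definition complex_vec :: "real^'n \<Rightarrow> complex^'n" where
  "complex_vec v = (\<chi> i. complex_of_real (v $ i))"

definition complex_mat :: "real^'n^'n \<Rightarrow> complex^'n^'n" where
  "complex_mat A = (\<chi> i j. complex_of_real (A $ i $ j))"

lemma norm_complex_vec: "norm (complex_vec v) = norm v"
  by (simp add: norm_vec_def complex_vec_def)

lemma bounded_linear_complex_vec: "bounded_linear complex_vec"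
proof (rule bounded_linear_intro[of _ 1])
  show "complex_vec (x + y) = complex_vec x + complex_vec y" for x y
    by (simp add: complex_vec_def vec_eq_iff)
  show "complex_vec (r *\<^sub>R x) = r *\<^sub>R complex_vec x" for r x
    by (simp add: complex_vec_def vec_eq_iff) (simp add: scaleR_conv_of_real)
qed (simp add: norm_complex_vec)

lemma complex_mat_mult_complex_vec: "complex_mat A *v complex_vec v = complex_vec (A *v v)"
  by (simp add: complex_mat_def complex_vec_def matrix_vector_mult_def vec_eq_iff)

lemma spec_complex_mat: "spec A = {c. \<exists>v. v \<noteq> 0 \<and> complex_mat A *v v = (\<chi> i. c * v $ i)}"
  by (simp add: spec_def complex_mat_def)

text \<open>The real parts of the coordinates of \<open>w v\<close>; together with \<open>re_along v (- \<i> * w)\<close>,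
  the imaginary parts, they turn a complex eigen-solution into real solutions.\<close>

definition re_along :: "complex^'n \<Rightarrow> complex \<Rightarrow> real^'n" where
  "re_along v w = (\<chi> i. Re (w * v $ i))"

lemma norm_re_along_le:
  fixes v :: "complex^'n"
  shows "norm (re_along v w) \<le> norm w * norm v"
proof -
  have "norm (re_along v w) \<le> norm ((\<chi> i. cmod (w * v $ i)) :: real^'n)"
    unfolding re_along_def
    by (intro norm_le_componentwise_cart) (simp only: vec_lambda_beta real_norm_def abs_norm_cancel abs_Re_le_cmod)
  also have "\<dots> = norm w * norm v"
    by (simp add: norm_vec_def norm_mult L2_set_right_distrib)
  finally show ?thesis .
qed

lemma bounded_linear_re_along: "bounded_linear (re_along v)"
proof (rule bounded_linear_intro[of _ "norm v"])
  show "re_along v (x + y) = re_along v x + re_along v y" for x y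
    by (simp add: re_along_def vec_eq_iff algebra_simps)
  show "re_along v (r *\<^sub>R x) = r *\<^sub>R re_along v x" for r x
    by (simp add: re_along_def vec_eq_iff)
qed (rule norm_re_along_le)

lemma eigenvector_re_along:
  assumes "complex_mat A *v v = (\<chi> i. c * v $ i)"
  shows "A *v re_along v w = re_along v (c * w)"
proof -
  have Av: "(\<Sum>j\<in>UNIV. complex_of_real (A $ i $ j) * v $ j) = c * v $ i" for i
    using assms by (simp add: complex_mat_def matrix_vector_mult_def vec_eq_iff)
  have "(A *v re_along v w) $ i = Re (w * (\<Sum>j\<in>UNIV. complex_of_real (A $ i $ j) * v $ j))" for i
    by (simp add: matrix_vector_mult_def re_along_def Re_sum sum_distrib_left algebra_simps)
  then show ?thesis unfolding Av by (simp add: vec_eq_iff re_along_def algebra_simps)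
qed

lemma norm_le_re_along:
  assumes "v $ i \<noteq> 0"
  shows "norm w \<le> (norm (re_along v w) + norm (re_along v (- \<i> * w))) / norm (v $ i)"
proof -
  have "norm w * norm (v $ i) \<le> \<bar>Re (w * v $ i)\<bar> + \<bar>Im (w * v $ i)\<bar>"
    using cmod_le[of "w * v $ i"] by (simp add: norm_mult)
  also have "\<dots> \<le> norm (re_along v w) + norm (re_along v (- \<i> * w))"
    using component_le_norm_cart[of "re_along v w" i] component_le_norm_cart[of "re_along v (- \<i> * w)" i]
    by (simp add: re_along_def)
  finally show ?thesis using assms by (simp add: field_simps)
qed

lemma is_solution_re_along:
  assumes "is_solution T (\<lambda>z. c * z) t0 y" "complex_mat A *v v = (\<chi> i. c * v $ i)"
  shows "is_solution T (\<lambda>x. A *v x) t0 (\<lambda>t. re_along v (y t))"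
  using assms(1) has_delta_derivative_linear[OF bounded_linear_re_along]
  unfolding is_solution_def eigenvector_re_along[OF assms(2)] by blast

lemma eigenvalue_in_stability_set:
  fixes A :: "real^'n^'n"
  assumes "uniformly_exp_stable T (\<lambda>x. A *v x)" and "c \<in> spec A"
  shows "c \<in> stability_set T"
proof -
  from assms(1) obtain K \<alpha> V where K: "K \<ge> 1" "\<alpha> > 0" "open V" "0 \<in> V"
    and stable: "\<forall>t0\<in>T. \<forall>t\<in>T. \<forall>x0\<in>V. \<forall>x. t0 \<le> t \<longrightarrow> is_solution T (\<lambda>x. A *v x) t0 x \<longrightarrow>
           x t0 = x0 \<longrightarrow> norm (x t) \<le> K * exp (- \<alpha> * (t - t0)) * norm x0"
    unfolding uniformly_exp_stable_def by blast
  from K obtain r where "r > 0" "ball 0 r \<subseteq> V" using open_contains_ball by blast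
  from assms(2) obtain v where v: "v \<noteq> 0" "complex_mat A *v v = (\<chi> i. c * v $ i)"
    unfolding spec_complex_mat by blast
  then obtain i where "v $ i \<noteq> 0" by (auto simp: vec_eq_iff)
  define K' where "K' = max 1 (2 * K * norm v / norm (v $ i))"
  have "norm (y t) \<le> K' * exp (- \<alpha> * (t - t0)) * norm (y t0)"
    if t: "t0 \<in> T" "t \<in> T" "t0 \<le> t" and y0: "y t0 \<in> ball 0 (r / (norm v + 1))"
      and sol: "is_solution T (\<lambda>z. c * z) t0 y" for t0 t y
  proof -
    have real_part_bound: "norm (re_along v (a * y t)) \<le> K * exp (- \<alpha> * (t - t0)) * (norm (y t0) * norm v)"
      if "norm a = 1" for a
    proof -
      have "norm (re_along v (a * y t0)) \<le> norm (y t0) * norm v"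
        using norm_re_along_le[of v "a * y t0"] that by (simp add: norm_mult)
      also have "\<dots> < r"
      proof -
        have "norm (y t0) * norm v \<le> r / (norm v + 1) * norm v"
          using y0 by (intro mult_right_mono) auto
        also have "\<dots> < r"
          using \<open>r > 0\<close> add_nonneg_pos[OF norm_ge_zero[of v] zero_less_one] by (simp add: field_simps)
        finally show ?thesis .
      qed
      finally have "re_along v (a * y t0) \<in> V" using \<open>ball 0 r \<subseteq> V\<close> by auto
      from stable[rule_format, OF t(1,2) this t(3)
          is_solution_re_along[OF is_solution_cmult[OF sol] v(2)]]
      have "norm (re_along v (a * y t)) \<le> K * exp (- \<alpha> * (t - t0)) * norm (re_along v (a * y t0))"
        by simp
      also have "\<dots> \<le> K * exp (- \<alpha> * (t - t0)) * (norm (y t0) * norm v)"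
        using norm_re_along_le[of v "a * y t0"] K that
        by (intro mult_left_mono) (auto simp: norm_mult)
      finally show ?thesis .
    qed
    have "norm (y t) \<le> (norm (re_along v (y t)) + norm (re_along v (- \<i> * y t))) / norm (v $ i)"
      by (rule norm_le_re_along) fact
    also have "\<dots> \<le> 2 * (K * exp (- \<alpha> * (t - t0)) * (norm (y t0) * norm v)) / norm (v $ i)"
      using real_part_bound[of 1] real_part_bound[of "- \<i>"] by (intro divide_right_mono) auto
    also have "\<dots> = 2 * K * norm v / norm (v $ i) * exp (- \<alpha> * (t - t0)) * norm (y t0)"
      by (simp add: field_simps)
    also have "\<dots> \<le> K' * exp (- \<alpha> * (t - t0)) * norm (y t0)"
      by (intro mult_right_mono) (auto simp: K'_def)
    finally show ?thesis .
  qed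
  moreover have "open (ball (0::complex) (r / (norm v + 1)))" "(0::complex) \<in> ball 0 (r / (norm v + 1))"
    using \<open>r > 0\<close> by (auto simp: add_nonneg_pos)
  ultimately show ?thesis
    unfolding stability_set_def uniformly_exp_stable_def using K
    by (intro CollectI exI[of _ K'] conjI exI[of _ \<alpha>] exI[of _ "ball 0 (r / (norm v + 1))"])
       (auto simp: K'_def)
qed

section \<open>Sufficiency\<close>

definition uniformly_decaying :: "real set \<Rightarrow> real^'n^'n \<Rightarrow> complex^'n^'n \<Rightarrow> bool" where
  "uniformly_decaying T A W \<longleftrightarrow> (\<exists>C\<ge>0. \<exists>\<gamma>>0. \<forall>t0\<in>T. \<forall>x. is_solution T (\<lambda>x. A *v x) t0 x \<longrightarrow>
      (\<forall>t\<in>T. t0 \<le> t \<longrightarrow> norm (W *v complex_vec (x t)) \<le> C * norm (x t0) * exp (- \<gamma> * (t - t0))))"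

lemma uniformly_decaying_zero: "uniformly_decaying T A 0"
  unfolding uniformly_decaying_def by (auto intro!: exI[of _ 1])

lemma uniformly_exp_stable_if_uniformly_decaying_id:
  assumes "uniformly_decaying T A (mat 1)"
  shows "uniformly_exp_stable T (\<lambda>x. A *v x)"
proof -
  from assms obtain C \<gamma> where "C \<ge> 0" "\<gamma> > 0" and
    decay: "\<forall>t0\<in>T. \<forall>x. is_solution T (\<lambda>x. A *v x) t0 x \<longrightarrow>
      (\<forall>t\<in>T. t0 \<le> t \<longrightarrow> norm (x t) \<le> C * norm (x t0) * exp (- \<gamma> * (t - t0)))"
    unfolding uniformly_decaying_def by (auto simp: norm_complex_vec)
  have "norm (x t) \<le> max 1 C * exp (- \<gamma> * (t - t0)) * norm (x t0)"
    if "t0 \<in> T" "t \<in> T" "t0 \<le> t" "is_solution T (\<lambda>x. A *v x) t0 x" for t0 t x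
  proof -
    have "norm (x t) \<le> C * norm (x t0) * exp (- \<gamma> * (t - t0))" using decay that by blast
    also have "\<dots> \<le> max 1 C * norm (x t0) * exp (- \<gamma> * (t - t0))" by (intro mult_right_mono) auto
    finally show ?thesis by (simp add: mult_ac)
  qed
  then show ?thesis
    unfolding uniformly_exp_stable_def using \<open>\<gamma> > 0\<close>
    by (intro exI[of _ "max 1 C"] conjI exI[of _ \<gamma>] exI[of _ UNIV]) auto
qed

lemma uniformly_decaying_if_not_eigenvalue:
  assumes "r \<notin> spec A" and "uniformly_decaying T A ((complex_mat A - mat r) ** W)"
  shows "uniformly_decaying T A W"
proof -
  from assms(2) obtain C \<gamma> where "C \<ge> 0" "\<gamma> > 0" and decay: "\<forall>t0\<in>T. \<forall>x. is_solution T (\<lambda>x. A *v x) t0 x \<longrightarrow>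
      (\<forall>t\<in>T. t0 \<le> t \<longrightarrow> norm (((complex_mat A - mat r) ** W) *v complex_vec (x t))
        \<le> C * norm (x t0) * exp (- \<gamma> * (t - t0)))"
    unfolding uniformly_decaying_def by blast
  have "\<forall>v\<in>UNIV. (complex_mat A - mat r) *v v = 0 \<longrightarrow> v = 0"
    using assms(1) by (auto simp: spec_complex_mat matrix_vector_mult_diff_rdistrib mat_matrix_vector_mult)
  from injective_imp_isometric[OF closed_UNIV subspace_UNIV matrix_vector_mul_bounded_linear this]
  obtain e where e: "e > 0" "\<And>v. e * norm v \<le> norm ((complex_mat A - mat r) *v v)" by blast
  have "norm (W *v complex_vec (x t)) \<le> C / e * norm (x t0) * exp (- \<gamma> * (t - t0))"
    if "t0 \<in> T" "is_solution T (\<lambda>x. A *v x) t0 x" "t \<in> T" "t0 \<le> t" for t0 x t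
  proof -
    have "e * norm (W *v complex_vec (x t)) \<le> norm (((complex_mat A - mat r) ** W) *v complex_vec (x t))"
      using e(2)[of "W *v complex_vec (x t)"] by (simp add: matrix_vector_mul_assoc)
    also have "\<dots> \<le> C * norm (x t0) * exp (- \<gamma> * (t - t0))" using decay that by blast
    finally have "e * norm (W *v complex_vec (x t)) \<le> C * norm (x t0) * exp (- \<gamma> * (t - t0))" .
    then show ?thesis using e(1) by (simp add: field_simps)
  qed
  then show ?thesis
    unfolding uniformly_decaying_def using \<open>C \<ge> 0\<close> \<open>\<gamma> > 0\<close> e(1)
    by (intro exI[of _ "C / e"] exI[of _ \<gamma>]) auto
qed

lemma is_inhomogeneous_solution_coordinate:
  fixes A :: "real^'n^'n" and W :: "complex^'n^'n"
  assumes sol: "is_solution T (\<lambda>x. A *v x) t0 x" and comm: "W ** complex_mat A = complex_mat A ** W"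
  shows "is_inhomogeneous_solution T r (\<lambda>t. (((complex_mat A - mat r) ** W) *v complex_vec (x t)) $ j)
           t0 (\<lambda>t. (W *v complex_vec (x t)) $ j)"
  unfolding is_inhomogeneous_solution_def
proof (intro ballI impI)
  fix t assume "t \<in> T" "t0 \<le> t"
  with sol have "has_delta_derivative (T \<inter> {t0..}) x (A *v x t) t" unfolding is_solution_def by blast
  moreover have "bounded_linear (\<lambda>v. (W *v complex_vec v) $ j)"
    using bounded_linear_compose[OF matrix_vector_mul_bounded_linear bounded_linear_complex_vec]
    by (rule bounded_linear_compose[OF bounded_linear_vec_nth])
  ultimately have "has_delta_derivative (T \<inter> {t0..}) (\<lambda>t. (W *v complex_vec (x t)) $ j)
      ((W *v complex_vec (A *v x t)) $ j) t"
    using has_delta_derivative_linear by blast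
  moreover have "W *v complex_vec (A *v x t) = complex_mat A *v (W *v complex_vec (x t))"
    by (simp add: complex_mat_mult_complex_vec[symmetric] matrix_vector_mul_assoc comm)
  ultimately show "has_delta_derivative (T \<inter> {t0..}) (\<lambda>t. (W *v complex_vec (x t)) $ j)
      (r * (W *v complex_vec (x t)) $ j + (((complex_mat A - mat r) ** W) *v complex_vec (x t)) $ j) t"
    by (simp add: matrix_vector_mult_diff_rdistrib mat_matrix_vector_mult flip: matrix_vector_mul_assoc)
qed

context bounded_graininess_time_scale
begin

lemma uniformly_decaying_if_stable_eigenvalue:
  fixes A :: "real^'n^'n"
  assumes "r \<in> stability_set T" and comm: "W ** complex_mat A = complex_mat A ** W"
    and "uniformly_decaying T A ((complex_mat A - mat r) ** W)"
  shows "uniformly_decaying T A W"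
proof -
  from assms(3) obtain C \<gamma> where "C \<ge> 0" "\<gamma> > 0" and decay: "\<forall>t0\<in>T. \<forall>x. is_solution T (\<lambda>x. A *v x) t0 x \<longrightarrow>
      (\<forall>t\<in>T. t0 \<le> t \<longrightarrow> norm (((complex_mat A - mat r) ** W) *v complex_vec (x t))
        \<le> C * norm (x t0) * exp (- \<gamma> * (t - t0)))"
    unfolding uniformly_decaying_def by blast
  obtain C' \<gamma>' where "C' \<ge> 0" "\<gamma>' > 0" and inhomogeneous_decay:
    "\<And>t0 y f M t. t0 \<in> T \<Longrightarrow> M \<ge> 0 \<Longrightarrow> is_inhomogeneous_solution T r f t0 y \<Longrightarrow>
       (\<forall>t\<in>T. t0 \<le> t \<longrightarrow> norm (f t) \<le> M * exp (- \<gamma> * (t - t0))) \<Longrightarrow> t \<in> T \<Longrightarrow> t0 \<le> t \<Longrightarrow>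
       norm (y t) \<le> C' * (norm (y t0) + M) * exp (- \<gamma>' * (t - t0))"
    using inhomogeneous_exp_decay[OF assms(1) \<open>\<gamma> > 0\<close>] by blast
  obtain BW where "BW > 0" and BW: "\<And>v. norm (W *v complex_vec v) \<le> norm v * BW"
    using bounded_linear.pos_bounded[OF bounded_linear_compose[OF matrix_vector_mul_bounded_linear
          bounded_linear_complex_vec, of W]] by (auto simp: o_def)
  define C'' where "C'' = C' * (BW + C)"
  have coordinate_bound: "norm ((W *v complex_vec (x t)) $ j) \<le> C'' * norm (x t0) * exp (- \<gamma>' * (t - t0))"
    if sol: "t0 \<in> T" "is_solution T (\<lambda>x. A *v x) t0 x" and t: "t \<in> T" "t0 \<le> t" for t0 x t j
  proof -
    have "\<forall>t\<in>T. t0 \<le> t \<longrightarrow> norm ((((complex_mat A - mat r) ** W) *v complex_vec (x t)) $ j)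
        \<le> C * norm (x t0) * exp (- \<gamma> * (t - t0))"
    proof (intro ballI impI)
      fix t assume "t \<in> T" "t0 \<le> t"
      with decay sol have "norm (((complex_mat A - mat r) ** W) *v complex_vec (x t))
          \<le> C * norm (x t0) * exp (- \<gamma> * (t - t0))" by blast
      with Finite_Cartesian_Product.norm_nth_le show "norm ((((complex_mat A - mat r) ** W) *v complex_vec (x t)) $ j)
          \<le> C * norm (x t0) * exp (- \<gamma> * (t - t0))" by (rule order_trans)
    qed
    from inhomogeneous_decay[OF sol(1) _ is_inhomogeneous_solution_coordinate[OF sol(2) comm] this t]
    have "norm ((W *v complex_vec (x t)) $ j)
        \<le> C' * (norm ((W *v complex_vec (x t0)) $ j) + C * norm (x t0)) * exp (- \<gamma>' * (t - t0))"
      using \<open>C \<ge> 0\<close> by simp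
    also have "\<dots> \<le> C' * (BW * norm (x t0) + C * norm (x t0)) * exp (- \<gamma>' * (t - t0))"
      using order_trans[OF Finite_Cartesian_Product.norm_nth_le BW] \<open>C' \<ge> 0\<close>
      by (intro mult_right_mono mult_left_mono add_right_mono) (auto simp: mult.commute)
    finally show ?thesis by (simp add: C''_def algebra_simps)
  qed
  have "norm (W *v complex_vec (x t)) \<le> CARD('n) * C'' * norm (x t0) * exp (- \<gamma>' * (t - t0))"
    if "t0 \<in> T" "is_solution T (\<lambda>x. A *v x) t0 x" "t \<in> T" "t0 \<le> t" for t0 x t
  proof -
    have "norm (W *v complex_vec (x t)) \<le> (\<Sum>j\<in>UNIV. norm ((W *v complex_vec (x t)) $ j))"
      by (simp add: norm_vec_def L2_set_le_sum)
    also have "\<dots> \<le> (\<Sum>j\<in>(UNIV::'n set). C'' * norm (x t0) * exp (- \<gamma>' * (t - t0)))"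
      using coordinate_bound[OF that] by (rule sum_mono)
    finally show ?thesis by (simp add: mult_ac)
  qed
  then show ?thesis
    unfolding uniformly_decaying_def using \<open>\<gamma>' > 0\<close> \<open>C' \<ge> 0\<close> \<open>C \<ge> 0\<close> \<open>BW > 0\<close>
    by (intro exI[of _ "CARD('n) * C''"] exI[of _ \<gamma>']) (auto simp: C''_def)
qed

lemma uniformly_exp_stable_if_spec_subset:
  fixes A :: "real^'n^'n"
  assumes spec_subset: "spec A \<subseteq> stability_set T"
  shows "uniformly_exp_stable T (\<lambda>x. A *v x)"
proof -
  obtain d :: nat and root where "poly_mat (\<Prod>i<d. [:- root i, 1:]) (complex_mat A) = 0"
    using annihilating_linear_factors by blast
  define W where "W k = poly_mat (\<Prod>i<k. [:- root i, 1:]) (complex_mat A)" for k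
  have W_Suc: "W (Suc k) = (complex_mat A - mat (root k)) ** W k" for k
  proof -
    have "W (Suc k) = poly_mat ([:- root k, 1:] * (\<Prod>i<k. [:- root i, 1:])) (complex_mat A)"
      by (simp add: W_def mult.commute)
    then show ?thesis by (simp only: poly_mat_mult poly_mat_monic_linear W_def)
  qed
  have "uniformly_decaying T A (W (d - j))" if "j \<le> d" for j
    using that
  proof (induction j)
    case 0
    then show ?case using \<open>poly_mat _ _ = 0\<close> uniformly_decaying_zero by (simp add: W_def)
  next
    case (Suc j)
    then have next_factor: "uniformly_decaying T A ((complex_mat A - mat (root (d - Suc j))) ** W (d - Suc j))"
      by (simp add: W_Suc[symmetric] Suc_diff_Suc)
    have comm: "W (d - Suc j) ** complex_mat A = complex_mat A ** W (d - Suc j)"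
      by (simp add: W_def poly_mat_commute)
    show ?case
    proof (cases "root (d - Suc j) \<in> spec A")
      case True
      with spec_subset have "root (d - Suc j) \<in> stability_set T" by blast
      from uniformly_decaying_if_stable_eigenvalue[OF this comm next_factor] show ?thesis .
    qed (rule uniformly_decaying_if_not_eigenvalue[OF _ next_factor])
  qed
  from this[of d] show ?thesis
    by (simp add: W_def uniformly_exp_stable_if_uniformly_decaying_id)
qed

end

theorem mainTheorem3:
  fixes T :: "real set" and A :: "real^'n^'n"
  assumes "time_scale T"
    and "\<not> bdd_above T"
    and "\<exists>B. \<forall>t\<in>T. graininess T t \<le> B"
  shows "uniformly_exp_stable T (\<lambda>x. A *v x) \<longleftrightarrow> spec A \<subseteq> stability_set T"
proof -
  from assms(3) obtain B where B: "\<forall>t\<in>T. graininess T t \<le> B" by blast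
  interpret bounded_graininess_time_scale T "max B 0"
  proof
    show "closed T" using assms(1) by (simp add: time_scale_def)
    show "\<not> bdd_above T" by (rule assms(2))
    show "sigma T t - t \<le> max B 0" if "t \<in> T" for t using B that by (force simp: graininess_def)
  qed simp
  show ?thesis
    using eigenvalue_in_stability_set uniformly_exp_stable_if_spec_subset by blast
qed

end
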